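(* Let $M \in \mathcal{E}^2$ and let $p \in \mathbb{M} \cap M$. Then there is a condition $p^M \in \mathbb{M}$ which is the smallest element of $\mathbb{M}$ extending $p$ and containing $M$ as an element; that is, $p^M \le p$, $M \in p^M$, and every $r \in \mathbb{M}$ with $r \le p$ and $M \in r$ satisfies $r \le p^M$.
   Context: Fix a well-ordering $\unlhd$ of $H(\aleph_2)$; "elementary submodel of $H(\aleph_2)$" means elementary submodel of the structure $(H(\aleph_2),\in,\unlhd)$. An elementary submodel $P$ of $H(\aleph_2)$ of size $\aleph_1$ is internally approachable if it is the union of an increasing continuous $\in$-chain $\langle P_\xi:\xi<\omega_1\rangle$ of countable elementary submodels of $H(\aleph_2)$ such that $\langle P_\xi:\xi<\eta\rangle\in P_{\eta+1}$ for every $\eta<\omega_1$. Let $\mathcal{E}^2_0$ be the set of all countable elementary submodels of $H(\aleph_2)$, $\mathcal{E}^2_1$ the set of all internally approachable elementary submodels of $H(\aleph_2)$ of size $\aleph_1$, and $\mathcal{E}^2=\mathcal{E}^2_0\cup\mathcal{E}^2_1$. The forcing $\mathbb{M}$ consists of all finite sets $p$ of models in $\mathcal{E}^2$ which form an $\in$-chain (can be enumerated as $M_0\in M_1\in\dots\in M_n$) and are closed under pairwise intersection; $q\le p$ iff $p\subseteq q$. *)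

theory Defs
  imports Main "HOL-Library.Countable_Set"
begin

text \<open>The set-theoretic universe is modelled by a type 'v with a membership
relation mem.  Then the elements of hereditary
size at most aleph_1 form (an isomorphic copy of) the true H(aleph_2).\<close>

definition ext :: "('v \<Rightarrow> 'v \<Rightarrow> bool) \<Rightarrow> 'v \<Rightarrow> 'v set" where
  "ext mem x = {y. mem y x}"

definition aleph1 :: "nat set rel" where
  "aleph1 = cardSuc natLeq"

definition aleph2 :: "nat set set rel" where
  "aleph2 = cardSuc aleph1"

definition universe :: "('v \<Rightarrow> 'v \<Rightarrow> bool) \<Rightarrow> bool" where
  "universe mem \<longleftrightarrow>
     wf {(x, y). mem x y}
   \<and> (\<forall>x y. ext mem x = ext mem y \<longrightarrow> x = y)
   \<and> (\<forall>A :: 'v set. (card_of A, aleph1) \<in> ordLeq \<longrightarrow> (\<exists>x. ext mem x = A))"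

definition trcl :: "('v \<Rightarrow> 'v \<Rightarrow> bool) \<Rightarrow> 'v \<Rightarrow> 'v set" where
  "trcl mem x = {y. (y, x) \<in> {(a, b). mem a b}\<^sup>+}"

definition H2 :: "('v \<Rightarrow> 'v \<Rightarrow> bool) \<Rightarrow> 'v set" where
  "H2 mem = {x. (card_of (trcl mem x), aleph2) \<in> ordLess}"

definition wo_H2 :: "('v \<Rightarrow> 'v \<Rightarrow> bool) \<Rightarrow> ('v \<Rightarrow> 'v \<Rightarrow> bool) \<Rightarrow> bool" where
  "wo_H2 mem le \<longleftrightarrow>
     well_order_on (H2 mem) {(x, y). x \<in> H2 mem \<and> y \<in> H2 mem \<and> le x y}"

datatype fm = FMem nat nat | FLe nat nat | FEq nat nat | FNeg fm | FConj fm fm | FEx fm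

fun sat :: "'v set \<Rightarrow> ('v \<Rightarrow> 'v \<Rightarrow> bool) \<Rightarrow> ('v \<Rightarrow> 'v \<Rightarrow> bool) \<Rightarrow> fm \<Rightarrow> (nat \<Rightarrow> 'v) \<Rightarrow> bool" where
  "sat D mem le (FMem i j) a = mem (a i) (a j)"
| "sat D mem le (FLe i j) a = le (a i) (a j)"
| "sat D mem le (FEq i j) a = (a i = a j)"
| "sat D mem le (FNeg \<phi>) a = (\<not> sat D mem le \<phi> a)"
| "sat D mem le (FConj \<phi> \<psi>) a = (sat D mem le \<phi> a \<and> sat D mem le \<psi> a)"
| "sat D mem le (FEx \<phi>) a = (\<exists>x\<in>D. sat D mem le \<phi> (case_nat x a))"

definition elem_sub :: "('v \<Rightarrow> 'v \<Rightarrow> bool) \<Rightarrow> ('v \<Rightarrow> 'v \<Rightarrow> bool) \<Rightarrow> 'v \<Rightarrow> bool" where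
  "elem_sub mem le P \<longleftrightarrow>
     ext mem P \<subseteq> H2 mem
   \<and> (\<forall>\<phi> a. (\<forall>n. a n \<in> ext mem P) \<longrightarrow>
          (sat (ext mem P) mem le \<phi> a \<longleftrightarrow> sat (H2 mem) mem le \<phi> a))"

definition transset :: "('v \<Rightarrow> 'v \<Rightarrow> bool) \<Rightarrow> 'v \<Rightarrow> bool" where
  "transset mem x \<longleftrightarrow> (\<forall>y z. mem z y \<and> mem y x \<longrightarrow> mem z x)"

definition ordinal :: "('v \<Rightarrow> 'v \<Rightarrow> bool) \<Rightarrow> 'v \<Rightarrow> bool" where
  "ordinal mem x \<longleftrightarrow> transset mem x \<and> (\<forall>y. mem y x \<longrightarrow> transset mem y)"

definition Omega1 :: "('v \<Rightarrow> 'v \<Rightarrow> bool) \<Rightarrow> 'v set" where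
  "Omega1 mem = {\<xi>. ordinal mem \<xi> \<and> countable (ext mem \<xi>)}"

definition is_succ :: "('v \<Rightarrow> 'v \<Rightarrow> bool) \<Rightarrow> 'v \<Rightarrow> 'v \<Rightarrow> bool" where
  "is_succ mem s \<eta> \<longleftrightarrow> ext mem s = insert \<eta> (ext mem \<eta>)"

definition is_limit :: "('v \<Rightarrow> 'v \<Rightarrow> bool) \<Rightarrow> 'v \<Rightarrow> bool" where
  "is_limit mem \<eta> \<longleftrightarrow> ordinal mem \<eta> \<and> ext mem \<eta> \<noteq> {} \<and> (\<forall>\<zeta>. \<not> is_succ mem \<eta> \<zeta>)"

definition is_pair :: "('v \<Rightarrow> 'v \<Rightarrow> bool) \<Rightarrow> 'v \<Rightarrow> 'v \<Rightarrow> 'v \<Rightarrow> bool" where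
  "is_pair mem z a b \<longleftrightarrow>
     (\<exists>u v. ext mem z = {u, v} \<and> ext mem u = {a} \<and> ext mem v = {a, b})"

definition is_seq :: "('v \<Rightarrow> 'v \<Rightarrow> bool) \<Rightarrow> 'v \<Rightarrow> 'v \<Rightarrow> ('v \<Rightarrow> 'v) \<Rightarrow> bool" where
  "is_seq mem s \<eta> P \<longleftrightarrow> ext mem s = {z. \<exists>\<xi>. mem \<xi> \<eta> \<and> is_pair mem z \<xi> (P \<xi>)}"

definition E2_0 :: "('v \<Rightarrow> 'v \<Rightarrow> bool) \<Rightarrow> ('v \<Rightarrow> 'v \<Rightarrow> bool) \<Rightarrow> 'v set" where
  "E2_0 mem le = {P. elem_sub mem le P \<and> countable (ext mem P)}"

definition internally_approachable :: "('v \<Rightarrow> 'v \<Rightarrow> bool) \<Rightarrow> ('v \<Rightarrow> 'v \<Rightarrow> bool) \<Rightarrow> 'v \<Rightarrow> bool" where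
  "internally_approachable mem le P \<longleftrightarrow>
     (\<exists>Q :: 'v \<Rightarrow> 'v.
        (\<forall>\<xi>\<in>Omega1 mem. Q \<xi> \<in> E2_0 mem le)
      \<and> (\<forall>\<xi>\<in>Omega1 mem. \<forall>\<eta>\<in>Omega1 mem. mem \<xi> \<eta> \<longrightarrow>
            mem (Q \<xi>) (Q \<eta>) \<and> ext mem (Q \<xi>) \<subseteq> ext mem (Q \<eta>))
      \<and> (\<forall>\<eta>\<in>Omega1 mem. is_limit mem \<eta> \<longrightarrow>
            ext mem (Q \<eta>) = (\<Union>\<xi>\<in>ext mem \<eta>. ext mem (Q \<xi>)))
      \<and> ext mem P = (\<Union>\<xi>\<in>Omega1 mem. ext mem (Q \<xi>))
      \<and> (\<forall>\<eta>\<in>Omega1 mem. \<forall>\<eta>'. is_succ mem \<eta>' \<eta> \<longrightarrow>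
            (\<exists>s. is_seq mem s \<eta> Q \<and> mem s (Q \<eta>'))))"

definition E2_1 :: "('v \<Rightarrow> 'v \<Rightarrow> bool) \<Rightarrow> ('v \<Rightarrow> 'v \<Rightarrow> bool) \<Rightarrow> 'v set" where
  "E2_1 mem le = {P. elem_sub mem le P \<and> (card_of (ext mem P), aleph1) \<in> ordIso
                     \<and> internally_approachable mem le P}"

definition E2 :: "('v \<Rightarrow> 'v \<Rightarrow> bool) \<Rightarrow> ('v \<Rightarrow> 'v \<Rightarrow> bool) \<Rightarrow> 'v set" where
  "E2 mem le = E2_0 mem le \<union> E2_1 mem le"

definition in_chain :: "('v \<Rightarrow> 'v \<Rightarrow> bool) \<Rightarrow> 'v set \<Rightarrow> bool" where
  "in_chain mem A \<longleftrightarrow>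
     (\<exists>xs. set xs = A \<and> (\<forall>i. Suc i < length xs \<longrightarrow> mem (xs ! i) (xs ! Suc i)))"

definition Mforce :: "('v \<Rightarrow> 'v \<Rightarrow> bool) \<Rightarrow> ('v \<Rightarrow> 'v \<Rightarrow> bool) \<Rightarrow> 'v set" where
  "Mforce mem le = {p. finite (ext mem p) \<and> ext mem p \<subseteq> E2 mem le
       \<and> in_chain mem (ext mem p)
       \<and> (\<forall>N\<in>ext mem p. \<forall>N'\<in>ext mem p. \<exists>K\<in>ext mem p. ext mem K = ext mem N \<inter> ext mem N')}"

definition Mle :: "('v \<Rightarrow> 'v \<Rightarrow> bool) \<Rightarrow> 'v \<Rightarrow> 'v \<Rightarrow> bool" where
  "Mle mem q p \<longleftrightarrow> ext mem p \<subseteq> ext mem q"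

end

theory Submission
  imports Defs
begin

text \<open>
  The condition p^M is p \<union> {M} \<union> {N \<inter> M | N \<in> p}. It is the least candidate: a condition
  r \<le> p with M \<in> r contains every N \<inter> M, as conditions are closed under intersections and a
  model is determined by its elements.

  It remains to see that p^M is a condition. Since p \<in> M is finite, p \<subseteq> M, and countable
  elements of an elementary submodel are subsets of it; so N \<inter> M = N unless N \<in> p has size
  \<aleph>_1. If M has size \<aleph>_1 as well, then \<omega>_1 \<subseteq> M and M contains a code of the approaching
  chain of N; its countable members, being elements of M, are subsets of M, so again N \<subseteq> M.
  Otherwise M is countable, \<delta> = \<omega>_1 \<inter> M is a countable limit ordinal, and the code in M shows
  that N \<inter> M is the \<delta>-th model of the approaching chain of N: a countable elementary
  submodel which belongs to N. Inserting N \<inter> M directly below N in the \<in>-chain p, and M on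
  top, yields an \<in>-chain closed under intersections.
\<close>

unbundle cardinal_syntax

lemma Card_order_aleph1: "Card_order aleph1"
  unfolding aleph1_def by (simp add: cardSuc_Card_order natLeq_Card_order)

lemma natLeq_ordLeq_aleph1: "natLeq \<le>o aleph1"
  unfolding aleph1_def by (simp add: cardSuc_ordLeq natLeq_Card_order)

lemma countable_ordLeq_aleph1: assumes "countable A" shows "|A| \<le>o aleph1"
proof -
  obtain f :: "_ \<Rightarrow> nat" where "inj_on f A" using assms by (auto simp: countable_def)
  then have "|A| \<le>o |UNIV :: nat set|" by (intro card_of_ordLeqI) auto
  also have "|UNIV :: nat set| =o natLeq" by (rule card_of_nat)
  finally have "|A| \<le>o natLeq" .
  then show ?thesis using natLeq_ordLeq_aleph1 by (rule ordLeq_transitive)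
qed

lemma ordLess_aleph2_iff: "( |A| <o aleph2) = ( |A| \<le>o aleph1)"
  unfolding aleph2_def using cardSuc_ordLeq_ordLess[OF Card_order_aleph1 card_of_Card_order] by blast

lemma infinite_Field_aleph1: "\<not> finite (Field aleph1)"
proof
  assume "finite (Field aleph1)"
  then have "\<not> natLeq \<le>o |Field aleph1|" using infinite_iff_natLeq_ordLeq by blast
  moreover have "|Field aleph1| =o aleph1" by (rule card_of_Field_ordIso[OF Card_order_aleph1])
  ultimately show False using natLeq_ordLeq_aleph1 ordLeq_ordIso_trans ordIso_symmetric by blast
qed

lemma ordLeq_aleph1_iff_Field: "( |A| \<le>o aleph1) = ( |A| \<le>o |Field aleph1| )"
  using card_of_Field_ordIso[OF Card_order_aleph1] ordLeq_ordIso_trans ordIso_symmetric by blast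

lemma UN_ordLeq_aleph1:
  assumes "|I| \<le>o aleph1" "\<And>i. i \<in> I \<Longrightarrow> |A i| \<le>o aleph1"
  shows "|\<Union>i\<in>I. A i| \<le>o aleph1"
  using assms card_of_UNION_ordLeq_infinite[OF infinite_Field_aleph1, of I A]
  by (simp add: ordLeq_aleph1_iff_Field)

lemma successively_interpolate:
  assumes "successively R xs" "\<forall>x\<in>set xs. R x m"
    and "\<forall>x\<in>set xs. k x \<noteq> x \<longrightarrow> R (k x) x \<and> (\<forall>y. R y x \<and> R y m \<longrightarrow> R y (k x))"
  shows "successively R (concat (map (\<lambda>x. if k x = x then [x] else [k x, x]) xs) @ [m])"
  using assms
proof (induction xs)
  case (Cons x xs)
  let ?f = "\<lambda>x. if k x = x then [x] else [k x, x]"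
  have "R x (hd (concat (map ?f xs) @ [m]))"
  proof (cases xs)
    case Nil
    then show ?thesis using Cons.prems(2) by simp
  next
    case (Cons y ys)
    with Cons.prems show ?thesis by auto
  qed
  with Cons show ?case by (auto simp: successively_append_iff successively_Cons)
qed simp

lemma Int_closed_insert_restrict:
  fixes F :: "'a set set"
  assumes "\<forall>A\<in>F. \<forall>B\<in>F. A \<inter> B \<in> F"
  shows "\<forall>A\<in>insert X (F \<union> (\<lambda>A. A \<inter> X) ` F). \<forall>B\<in>insert X (F \<union> (\<lambda>A. A \<inter> X) ` F).
           A \<inter> B \<in> insert X (F \<union> (\<lambda>A. A \<inter> X) ` F)"
proof (intro ballI)
  let ?G = "insert X (F \<union> (\<lambda>A. A \<inter> X) ` F)"
  have restrict: "C \<inter> X \<in> ?G" if "C \<in> insert X F" for C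
    using that by auto
  have Int_in: "C \<inter> D \<in> ?G \<and> C \<inter> D \<inter> X \<in> ?G" if "C \<in> insert X F" "D \<in> insert X F" for C D
  proof (cases "C = X \<or> D = X")
    case True
    then have "C \<inter> D = D \<inter> X \<or> C \<inter> D = C \<inter> X" by blast
    then show ?thesis using that True restrict by (metis Int_absorb Int_assoc)
  next
    case False
    then have "C \<inter> D \<in> F" using that assms by blast
    then show ?thesis by blast
  qed
  fix A B assume "A \<in> ?G" "B \<in> ?G"
  then obtain C D where CD: "C \<in> insert X F" "D \<in> insert X F"
    and "A = C \<or> A = C \<inter> X" "B = D \<or> B = D \<inter> X" by blast
  then have "A \<inter> B = C \<inter> D \<or> A \<inter> B = C \<inter> D \<inter> X" by blast
  then show "A \<inter> B \<in> ?G" using Int_in[OF CD] by metis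
qed

section \<open>Formulas of the language {\<in>, \<unlhd>}\<close>

text \<open>Variables are de Bruijn indices: FEx binds index 0 and shifts the others, as case_nat does
  in sat. The derived formulas take the indices of their free variables as arguments; for
  instance fPair z a b says that variable z is the Kuratowski pair of variables a and b.\<close>

definition fAll where "fAll \<phi> = FNeg (FEx (FNeg \<phi>))"
definition fOr where "fOr \<phi> \<psi> = FNeg (FConj (FNeg \<phi>) (FNeg \<psi>))"
definition fImp where "fImp \<phi> \<psi> = FNeg (FConj \<phi> (FNeg \<psi>))"
definition fIff where "fIff \<phi> \<psi> = FConj (fImp \<phi> \<psi>) (fImp \<psi> \<phi>)"

lemma sat_fAll[simp]: "sat D mem le (fAll \<phi>) a = (\<forall>x\<in>D. sat D mem le \<phi> (case_nat x a))"
  by (simp add: fAll_def)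
lemma sat_fOr[simp]: "sat D mem le (fOr \<phi> \<psi>) a = (sat D mem le \<phi> a \<or> sat D mem le \<psi> a)"
  by (simp add: fOr_def)
lemma sat_fImp[simp]: "sat D mem le (fImp \<phi> \<psi>) a = (sat D mem le \<phi> a \<longrightarrow> sat D mem le \<psi> a)"
  by (simp add: fImp_def)
lemma sat_fIff[simp]: "sat D mem le (fIff \<phi> \<psi>) a = (sat D mem le \<phi> a \<longleftrightarrow> sat D mem le \<psi> a)"
  by (auto simp add: fIff_def)

lemma case_nat_numeral[simp]: "case_nat a f (numeral n) = f (pred_numeral n)"
  by (simp add: numeral_eq_Suc)

definition fExt where "fExt x \<psi> = fAll (fIff (FMem 0 (Suc x)) \<psi>)"
definition fEmpty where "fEmpty x = FNeg (FEx (FMem 0 (Suc x)))"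
definition fSucc where "fSucc x y = fExt x (fOr (FMem 0 (Suc y)) (FEq 0 (Suc y)))"
definition fPair where "fPair z a b = FEx (FEx (FConj (fExt (Suc (Suc z)) (fOr (FEq 0 2) (FEq 0 1)))
   (FConj (fExt 1 (FEq 0 (Suc (Suc (Suc a))))) (fExt 0 (fOr (FEq 0 (Suc (Suc (Suc a)))) (FEq 0 (Suc (Suc (Suc b)))))))))"
definition fTrans where "fTrans x = fAll (fAll (fImp (FConj (FMem 0 1) (FMem 1 (Suc (Suc x)))) (FMem 0 (Suc (Suc x)))))"
definition fOrd where "fOrd x = FConj (fTrans x) (fAll (fImp (FMem 0 (Suc x)) (fTrans 0)))"
definition fZeroOrSucc where "fZeroOrSucc x = fOr (fEmpty x) (FEx (fSucc (Suc x) 0))"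
definition fNat where "fNat n = FConj (fOrd n) (FConj (fZeroOrSucc n) (fAll (fImp (FMem 0 (Suc n)) (fZeroOrSucc 0))))"
definition fFun where "fFun g = fAll (fAll (fAll (fAll (fAll (fImp
   (FConj (FMem 4 (Suc (Suc (Suc (Suc (Suc g)))))) (FConj (FMem 3 (Suc (Suc (Suc (Suc (Suc g)))))) (FConj (fPair 4 2 1) (fPair 3 2 0)))) (FEq 1 0))))))"
definition fCtbl where "fCtbl x = FEx (FConj (fFun 0) (fAll (fImp (FMem 0 (Suc (Suc x)))
   (FEx (FConj (FMem 0 2) (FEx (FConj (fNat 0) (fPair 1 0 2))))))))"
definition fCtblOrd where "fCtblOrd x = FConj (fOrd x) (fCtbl x)"
definition fLimit where "fLimit x = FConj (fOrd x) (FConj (FNeg (fEmpty x)) (FNeg (FEx (fSucc (Suc x) 0))))"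

fun relativize :: "nat \<Rightarrow> fm \<Rightarrow> fm" where
  "relativize k (FMem i j) = FMem i j"
| "relativize k (FLe i j) = FLe i j"
| "relativize k (FEq i j) = FEq i j"
| "relativize k (FNeg \<phi>) = FNeg (relativize k \<phi>)"
| "relativize k (FConj \<phi> \<psi>) = FConj (relativize k \<phi>) (relativize k \<psi>)"
| "relativize k (FEx \<phi>) = FEx (FConj (FMem 0 (Suc k)) (relativize (Suc k) \<phi>))"

lemma sat_relativize: "sat D mem le (relativize k \<phi>) e = sat (D \<inter> ext mem (e k)) mem le \<phi> e"
proof (induction \<phi> arbitrary: k e)
  case (FEx \<phi>)
  show ?case by (simp add: FEx ext_def) blast
qed simp_all

fun free_bound :: "fm \<Rightarrow> nat" where
  "free_bound (FMem i j) = Suc (max i j)"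
| "free_bound (FLe i j) = Suc (max i j)"
| "free_bound (FEq i j) = Suc (max i j)"
| "free_bound (FNeg \<phi>) = free_bound \<phi>"
| "free_bound (FConj \<phi> \<psi>) = max (free_bound \<phi>) (free_bound \<psi>)"
| "free_bound (FEx \<phi>) = free_bound \<phi> - 1"

lemma sat_cong_free_bound: "(\<And>n. n < free_bound \<phi> \<Longrightarrow> e n = e' n) \<Longrightarrow> sat D mem le \<phi> e = sat D mem le \<phi> e'"
proof (induction \<phi> arbitrary: e e')
  case (FEx \<phi>)
  have "sat D mem le \<phi> (case_nat x e) = sat D mem le \<phi> (case_nat x e')" for x
  proof (rule FEx.IH)
    fix n assume n: "n < free_bound \<phi>"
    show "case_nat x e n = case_nat x e' n"
    proof (cases n)
      case (Suc m)
      then have "m < free_bound (FEx \<phi>)" using n by simp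
      then show ?thesis using Suc FEx.prems by simp
    qed simp
  qed
  then show ?case by simp
next
  case (FMem i j)
  then have "e i = e' i" "e j = e' j" by simp_all
  then show ?case by simp
next
  case (FLe i j)
  then have "e i = e' i" "e j = e' j" by simp_all
  then show ?case by simp
next
  case (FEq i j)
  then have "e i = e' i" "e j = e' j" by simp_all
  then show ?case by simp
next
  case (FNeg \<phi>)
  have "sat D mem le \<phi> e = sat D mem le \<phi> e'" by (rule FNeg.IH) (simp add: FNeg.prems)
  then show ?case by simp
next
  case (FConj \<phi> \<psi>)
  have "sat D mem le \<phi> e = sat D mem le \<phi> e'" by (rule FConj.IH(1)) (simp add: FConj.prems)
  moreover have "sat D mem le \<psi> e = sat D mem le \<psi> e'" by (rule FConj.IH(2)) (simp add: FConj.prems)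
  ultimately show ?case by simp
qed

lemma all_case_nat: "x \<in> A \<Longrightarrow> \<forall>n. e n \<in> A \<Longrightarrow> \<forall>n. case_nat x e n \<in> A"
  by (simp split: nat.split)

definition "fUnionBelow = FEx (FConj (FMem 0 3) (FEx (FConj (FMem 0 6) (FEx (FConj (fPair 1 2 0) (FMem 3 0))))))"
definition "fChainCovers = fAll (fImp (FMem 0 2) (FEx (FConj (FMem 0 2) (FEx (FEx (FConj (fPair 2 1 0) (FConj (fCtblOrd 1) (FMem 3 0))))))))"
definition "fChainEntries = fAll (fImp (FMem 0 1) (FEx (FEx (FConj (fPair 2 1 0) (FConj (fCtblOrd 1) (FConj (fCtbl 0) (FConj (FMem 0 4) (fImp (fLimit 1) (fExt 0 fUnionBelow)))))))))"
definition "fChainTotal = fAll (fImp (fCtblOrd 0) (FEx (FConj (FMem 0 2) (FEx (fPair 1 2 0)))))"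
definition "fChain = FConj (fFun 0) (FConj fChainCovers (FConj fChainEntries fChainTotal))"

locale set_universe =
  fixes mem :: "'v \<Rightarrow> 'v \<Rightarrow> bool"
  assumes universe_mem: "universe mem"
begin

abbreviation E where "E \<equiv> ext mem"
abbreviation H where "H \<equiv> H2 mem"

lemma E_iff[simp]: "y \<in> E x \<longleftrightarrow> mem y x" by (simp add: ext_def)

lemma wf_mem: "wf {(x,y). mem x y}" using universe_mem by (simp add: universe_def)
lemma ext_inj: "E x = E y \<Longrightarrow> x = y" using universe_mem by (simp add: universe_def)
lemma ex_ext_eq: "|A| \<le>o aleph1 \<Longrightarrow> \<exists>x. E x = A" using universe_mem by (simp add: universe_def)
lemma ex_ext_eq_countable: "countable A \<Longrightarrow> \<exists>x. E x = A" by (rule ex_ext_eq[OF countable_ordLeq_aleph1])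
lemma mem_irrefl[simp]: "\<not> mem x x"
  using wf_not_refl[OF wf_mem] by auto

lemma trcl_iff: "y \<in> trcl mem x \<longleftrightarrow> (y, x) \<in> {(a,b). mem a b}\<^sup>+"
  by (simp add: trcl_def)

lemma trcl_subset_UN: "trcl mem x \<subseteq> E x \<union> (\<Union>y\<in>E x. trcl mem y)"
proof (rule subsetI)
  fix w assume "w \<in> trcl mem x"
  then have "(w, x) \<in> {(a,b). mem a b}\<^sup>+" by (simp only: trcl_iff)
  from tranclD2[OF this] obtain z where z: "(w,z) \<in> {(a,b). mem a b}\<^sup>*" "(z,x) \<in> {(a,b). mem a b}"
    by (elim exE conjE)
  have zx: "mem z x" using z(2) by simp
  show "w \<in> E x \<union> (\<Union>y\<in>E x. trcl mem y)"
  proof (cases "w = z")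
    case True then show ?thesis using zx by simp
  next
    case False
    from rtranclD[OF z(1)] False have "(w,z) \<in> {(a,b). mem a b}\<^sup>+" by (elim disjE conjE) simp_all
    then have "w \<in> trcl mem z" by (simp only: trcl_iff)
    then show ?thesis using zx by (intro UnI2 UN_I[of z]) simp_all
  qed
qed

lemma trcl_mono_mem: "mem y x \<Longrightarrow> trcl mem y \<subseteq> trcl mem x"
proof
  fix w assume "mem y x" "w \<in> trcl mem y"
  then have "(w,y) \<in> {(a,b). mem a b}\<^sup>+" "(y,x) \<in> {(a,b). mem a b}" by (simp_all add: trcl_def)
  then have "(w,x) \<in> {(a,b). mem a b}\<^sup>+" by (rule trancl_into_trancl)
  then show "w \<in> trcl mem x" by (simp add: trcl_def)
qed

lemma ext_subset_trcl: "E x \<subseteq> trcl mem x"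
proof
  fix w assume "w \<in> E x"
  then have "(w,x) \<in> {(a,b). mem a b}" by simp
  then have "(w,x) \<in> {(a,b). mem a b}\<^sup>+" by (rule r_into_trancl)
  then show "w \<in> trcl mem x" by (simp add: trcl_def)
qed

lemma H2_mem_closed: assumes "x \<in> H" "mem y x" shows "y \<in> H"
proof -
  have "|trcl mem y| \<le>o |trcl mem x|" by (rule card_of_mono1[OF trcl_mono_mem[OF assms(2)]])
  moreover have "|trcl mem x| <o aleph2" using assms(1) by (simp add: H2_def)
  ultimately have "|trcl mem y| <o aleph2" by (rule ordLeq_ordLess_trans)
  then show ?thesis by (simp add: H2_def)
qed

lemma H2_ext_ordLeq_aleph1: assumes "x \<in> H" shows "|E x| \<le>o aleph1"
proof -
  have "|E x| \<le>o |trcl mem x|" by (rule card_of_mono1[OF ext_subset_trcl])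
  moreover have "|trcl mem x| \<le>o aleph1" using assms by (simp add: H2_def ordLess_aleph2_iff)
  ultimately show ?thesis by (rule ordLeq_transitive)
qed

lemma H2_intro: assumes "E x \<subseteq> H" "|E x| \<le>o aleph1" shows "x \<in> H"
proof -
  have "|E x \<union> (\<Union>y\<in>E x. trcl mem y)| \<le>o aleph1"
  proof -
    have "|\<Union>i\<in>{True,False}. (if i then E x else (\<Union>y\<in>E x. trcl mem y))| \<le>o aleph1"
    proof (rule UN_ordLeq_aleph1)
      show "|{True, False}| \<le>o aleph1" by (intro countable_ordLeq_aleph1) simp
      fix i :: bool
      have "|\<Union>y\<in>E x. trcl mem y| \<le>o aleph1"
      proof (rule UN_ordLeq_aleph1)
        show "|E x| \<le>o aleph1" by (rule assms(2))
        fix y assume "y \<in> E x"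
        then have "y \<in> H" using assms(1) by blast
        then show "|trcl mem y| \<le>o aleph1" unfolding H2_def ordLess_aleph2_iff by simp
      qed
      then show "|if i then E x else (\<Union>y\<in>E x. trcl mem y)| \<le>o aleph1" using assms(2) by simp
    qed
    moreover have "(\<Union>i\<in>{True,False}. (if i then E x else (\<Union>y\<in>E x. trcl mem y))) = E x \<union> (\<Union>y\<in>E x. trcl mem y)"
      by auto
    ultimately show ?thesis by simp
  qed
  then have "|trcl mem x| \<le>o aleph1" by (rule ordLeq_transitive[OF card_of_mono1[OF trcl_subset_UN]])
  then show ?thesis by (simp add: H2_def ordLess_aleph2_iff)
qed

lemma H2_countable_intro: "countable (E x) \<Longrightarrow> E x \<subseteq> H \<Longrightarrow> x \<in> H"
  by (rule H2_intro[OF _ countable_ordLeq_aleph1])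

end

locale set_universe_le = set_universe mem for mem :: "'v \<Rightarrow> 'v \<Rightarrow> bool" +
  fixes le :: "'v \<Rightarrow> 'v \<Rightarrow> bool"
begin

abbreviation Sat where "Sat \<phi> e \<equiv> sat H mem le \<phi> e"

section \<open>Absoluteness for H(aleph_2)\<close>

text \<open>The predicates ending in H are what the formulas above say when evaluated in H(aleph_2);
  the lemmas named ..._iff show that they agree with the true notions on elements of H(aleph_2).\<close>

definition "extH x P \<longleftrightarrow> (\<forall>t\<in>H. mem t x \<longleftrightarrow> P t)"
definition "emptyH x \<longleftrightarrow> (\<forall>t\<in>H. \<not> mem t x)"
definition "succH x y \<longleftrightarrow> extH x (\<lambda>t. mem t y \<or> t = y)"
definition "pairH z a b \<longleftrightarrow> (\<exists>u\<in>H. \<exists>v\<in>H. extH z (\<lambda>t. t = u \<or> t = v) \<and> extH u (\<lambda>t. t = a) \<and> extH v (\<lambda>t. t = a \<or> t = b))"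
definition "transH x \<longleftrightarrow> (\<forall>y\<in>H. \<forall>z\<in>H. mem z y \<and> mem y x \<longrightarrow> mem z x)"
definition "ordH x \<longleftrightarrow> transH x \<and> (\<forall>y\<in>H. mem y x \<longrightarrow> transH y)"
definition "zero_or_succH x \<longleftrightarrow> emptyH x \<or> (\<exists>k\<in>H. succH x k)"
definition "natH n \<longleftrightarrow> ordH n \<and> zero_or_succH n \<and> (\<forall>m\<in>H. mem m n \<longrightarrow> zero_or_succH m)"
definition "funH g \<longleftrightarrow> (\<forall>z1\<in>H. \<forall>z2\<in>H. \<forall>a\<in>H. \<forall>b\<in>H. \<forall>c\<in>H.
    mem z1 g \<and> mem z2 g \<and> pairH z1 a b \<and> pairH z2 a c \<longrightarrow> b = c)"
definition "ctblH x \<longleftrightarrow> (\<exists>g\<in>H. funH g \<and> (\<forall>t\<in>H. mem t x \<longrightarrow> (\<exists>z\<in>H. mem z g \<and> (\<exists>n\<in>H. natH n \<and> pairH z n t))))"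
definition "limitH x \<longleftrightarrow> ordH x \<and> \<not> emptyH x \<and> \<not> (\<exists>y\<in>H. succH x y)"

lemma sat_fExt[simp]: "Sat (fExt x \<psi>) e = extH (e x) (\<lambda>t. Sat \<psi> (case_nat t e))"
  by (simp add: fExt_def extH_def)
lemma sat_fEmpty[simp]: "Sat (fEmpty x) e = emptyH (e x)"
  by (simp add: fEmpty_def emptyH_def)
lemma sat_fSucc[simp]: "Sat (fSucc x y) e = succH (e x) (e y)"
  by (simp add: fSucc_def succH_def)
lemma sat_fPair[simp]: "Sat (fPair z a b) e = pairH (e z) (e a) (e b)"
  by (simp add: fPair_def pairH_def)
lemma sat_fTrans[simp]: "Sat (fTrans x) e = transH (e x)"
  by (auto simp add: fTrans_def transH_def)
lemma sat_fOrd[simp]: "Sat (fOrd x) e = ordH (e x)"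
  by (simp add: fOrd_def ordH_def)
lemma sat_fZeroOrSucc[simp]: "Sat (fZeroOrSucc x) e = zero_or_succH (e x)"
  by (simp add: fZeroOrSucc_def zero_or_succH_def)
lemma sat_fNat[simp]: "Sat (fNat x) e = natH (e x)"
  by (simp add: fNat_def natH_def)
lemma sat_fFun[simp]: "Sat (fFun x) e = funH (e x)"
  by (simp add: fFun_def funH_def)
lemma sat_fCtbl[simp]: "Sat (fCtbl x) e = ctblH (e x)"
  by (simp add: fCtbl_def ctblH_def)
lemma sat_fLimit[simp]: "Sat (fLimit x) e = limitH (e x)"
  by (simp add: fLimit_def limitH_def)

lemma extH_iff: assumes "x \<in> H" "\<And>t. P t \<Longrightarrow> t \<in> H" shows "extH x P \<longleftrightarrow> E x = {t. P t}"
proof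
  assume h: "extH x P"
  show "E x = {t. P t}"
  proof (intro set_eqI iffI)
    fix t assume "t \<in> E x"
    then have "t \<in> H" "mem t x" using assms(1) H2_mem_closed by auto
    then show "t \<in> {t. P t}" using h unfolding extH_def by simp
  next
    fix t assume "t \<in> {t. P t}"
    then have "t \<in> H" "P t" using assms(2) by auto
    then show "t \<in> E x" using h unfolding extH_def by simp
  qed
next
  assume "E x = {t. P t}"
  then have "mem t x \<longleftrightarrow> P t" for t by (metis E_iff mem_Collect_eq)
  then show "extH x P" unfolding extH_def by simp
qed

lemma emptyH_iff: "x \<in> H \<Longrightarrow> emptyH x \<longleftrightarrow> E x = {}"
  unfolding emptyH_def by (auto dest: H2_mem_closed)

lemma succH_iff: "x \<in> H \<Longrightarrow> y \<in> H \<Longrightarrow> succH x y \<longleftrightarrow> is_succ mem x y"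
proof -
  assume "x \<in> H" "y \<in> H"
  have "succH x y \<longleftrightarrow> E x = {t. mem t y \<or> t = y}"
    unfolding succH_def by (rule extH_iff) (use \<open>x \<in> H\<close> \<open>y \<in> H\<close> H2_mem_closed in auto)
  also have "{t. mem t y \<or> t = y} = insert y (E y)" by auto
  finally show ?thesis by (simp add: is_succ_def del: E_iff)
qed

lemma pairH_iff: assumes "z \<in> H" "a \<in> H" "b \<in> H"
  shows "pairH z a b \<longleftrightarrow> is_pair mem z a b"
proof
  assume "pairH z a b"
  then obtain u v where uv: "u \<in> H" "v \<in> H" "extH z (\<lambda>t. t = u \<or> t = v)" "extH u (\<lambda>t. t = a)" "extH v (\<lambda>t. t = a \<or> t = b)"
    unfolding pairH_def by blast
  have "E z = {u, v}" using uv(3) extH_iff[OF assms(1), of "\<lambda>t. t = u \<or> t = v"] uv(1,2) by auto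
  moreover have "E u = {a}" using uv(4) extH_iff[OF uv(1), of "\<lambda>t. t = a"] assms by auto
  moreover have "E v = {a, b}" using uv(5) extH_iff[OF uv(2), of "\<lambda>t. t = a \<or> t = b"] assms by auto
  ultimately show "is_pair mem z a b" unfolding is_pair_def by blast
next
  assume "is_pair mem z a b"
  then obtain u v where uv: "E z = {u, v}" "E u = {a}" "E v = {a, b}" unfolding is_pair_def by blast
  have "u \<in> H" "v \<in> H" using uv(1) assms(1) H2_mem_closed by (metis E_iff insertI1 insertI2)+
  then show "pairH z a b" unfolding pairH_def extH_def using uv by (intro bexI[of _ u] bexI[of _ v]) auto
qed

lemma pair_H2: assumes "is_pair mem z a b" "z \<in> H" shows "a \<in> H" "b \<in> H"
proof -
  obtain u v where uv: "E z = {u, v}" "E u = {a}" "E v = {a, b}" using assms(1) unfolding is_pair_def by blast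
  have "v \<in> H" using uv(1) assms(2) H2_mem_closed by (metis E_iff insertI1 insertI2)
  then show "a \<in> H" "b \<in> H" using uv(3) H2_mem_closed by (metis E_iff insertI1 insertI2)+
qed

lemma pair_inj: assumes "is_pair mem z a b" "is_pair mem z c d" shows "a = c \<and> b = d"
proof -
  obtain u v where uv: "E z = {u, v}" "E u = {a}" "E v = {a, b}" using assms(1) unfolding is_pair_def by blast
  obtain u' v' where uv': "E z = {u', v'}" "E u' = {c}" "E v' = {c, d}" using assms(2) unfolding is_pair_def by blast
  have ac: "a = c"
  proof -
    have "u = u' \<or> u = v'" using uv(1) uv'(1) by blast
    then show ?thesis using uv(2) uv'(2,3) by (metis insert_iff singletonD)
  qed
  have "b = d"
  proof -
    have "v = u' \<or> v = v'" using uv(1) uv'(1) by blast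
    moreover have "v' = u \<or> v' = v" using uv(1) uv'(1) by blast
    ultimately show ?thesis using uv(2,3) uv'(2,3) ac by (metis doubleton_eq_iff insert_absorb2 singleton_insert_inj_eq')
  qed
  with ac show ?thesis by simp
qed

lemma pair_exists_H: assumes "a \<in> H" "b \<in> H" shows "\<exists>z\<in>H. is_pair mem z a b"
proof -
  obtain u where u: "E u = {a}" using ex_ext_eq_countable[of "{a}"] by auto
  obtain v where v: "E v = {a,b}" using ex_ext_eq_countable[of "{a,b}"] by auto
  obtain z where z: "E z = {u,v}" using ex_ext_eq_countable[of "{u,v}"] by auto
  have "u \<in> H" using u assms by (intro H2_countable_intro) auto
  moreover have "v \<in> H" using v assms by (intro H2_countable_intro) auto
  ultimately have "z \<in> H" using z by (intro H2_countable_intro) auto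
  then show ?thesis using u v z unfolding is_pair_def by blast
qed

lemma transH_iff: assumes "x \<in> H" shows "transH x \<longleftrightarrow> transset mem x"
  unfolding transH_def transset_def using assms H2_mem_closed by blast

lemma ordH_iff: assumes "x \<in> H" shows "ordH x \<longleftrightarrow> ordinal mem x"
  unfolding ordH_def ordinal_def using assms H2_mem_closed transH_iff by blast

definition "zero_or_succ x \<longleftrightarrow> E x = {} \<or> (\<exists>k. is_succ mem x k)"

lemma bex_succH_iff: assumes "x \<in> H" shows "(\<exists>k\<in>H. succH x k) \<longleftrightarrow> (\<exists>k. is_succ mem x k)"
proof
  assume "\<exists>k. is_succ mem x k"
  then obtain k where k: "is_succ mem x k" by blast
  then have "mem k x" unfolding is_succ_def by (metis E_iff insertI1)
  then have "k \<in> H" using assms H2_mem_closed by blast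
  then show "\<exists>k\<in>H. succH x k" using k succH_iff assms by blast
qed (use succH_iff assms in blast)

lemma zero_or_succH_iff: assumes "x \<in> H" shows "zero_or_succH x \<longleftrightarrow> zero_or_succ x"
  unfolding zero_or_succH_def zero_or_succ_def using bex_succH_iff[OF assms] emptyH_iff[OF assms] by simp

definition "isFun g \<longleftrightarrow> (\<forall>z1 z2 a b c. mem z1 g \<and> mem z2 g \<and> is_pair mem z1 a b \<and> is_pair mem z2 a c \<longrightarrow> b = c)"

lemma funH_iff: assumes "g \<in> H" shows "funH g \<longleftrightarrow> isFun g"
proof
  assume f: "funH g"
  show "isFun g" unfolding isFun_def
  proof (intro allI impI)
    fix z1 z2 a b c assume h: "mem z1 g \<and> mem z2 g \<and> is_pair mem z1 a b \<and> is_pair mem z2 a c"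
    then have H: "z1 \<in> H" "z2 \<in> H" using assms H2_mem_closed by blast+
    then have "a \<in> H" "b \<in> H" "c \<in> H" using h pair_H2 by blast+
    with H h f show "b = c" unfolding funH_def using pairH_iff by blast
  qed
next
  assume "isFun g"
  then show "funH g" unfolding funH_def isFun_def
    using pairH_iff assms H2_mem_closed by blast
qed

lemma limitH_iff: assumes "x \<in> H" shows "limitH x \<longleftrightarrow> is_limit mem x"
  unfolding limitH_def is_limit_def using bex_succH_iff[OF assms] ordH_iff[OF assms] emptyH_iff[OF assms] by blast

lemma ordinal_mem: assumes "ordinal mem x" "mem y x" shows "ordinal mem y"
  using assms unfolding ordinal_def transset_def by blast

text \<open>The finite von Neumann ordinals; they make countability expressible by a formula.\<close>

primrec num :: "nat \<Rightarrow> 'v" where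
  "num 0 = (SOME x. E x = {})"
| "num (Suc n) = (SOME x. E x = insert (num n) (E (num n)))"

declare num.simps[simp del]

lemma E_num: "E (num n) = num ` {..<n}"
proof (induction n)
  case 0
  have "\<exists>x. E x = {}" using ex_ext_eq_countable[of "{}"] by simp
  then have "E (SOME x. E x = {}) = {}" by (rule someI_ex)
  then show ?case by (simp add: num.simps)
next
  case (Suc n)
  have "\<exists>x. E x = insert (num n) (E (num n))" using Suc by (intro ex_ext_eq_countable) simp
  then have "E (SOME x. E x = insert (num n) (E (num n))) = insert (num n) (E (num n))" by (rule someI_ex)
  then have "E (num (Suc n)) = insert (num n) (E (num n))" by (simp only: num.simps)
  also have "\<dots> = num ` {..<Suc n}" using Suc by (auto simp: lessThan_Suc)
  finally show ?case .
qed

lemma E_num0: "E (num 0) = {}" using E_num[of 0] by (simp only: lessThan_0 image_empty)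
lemma E_numS: "E (num (Suc n)) = insert (num n) (E (num n))"
  using E_num[of "Suc n"] E_num[of n] by (simp only: lessThan_Suc image_insert)

lemma num_mem_iff: "mem y (num n) \<longleftrightarrow> (\<exists>m<n. y = num m)"
  using E_num[of n] by (metis E_iff image_iff lessThan_iff)

lemma num_inj: "num m = num n \<Longrightarrow> m = n"
  by (metis linorder_neqE_nat mem_irrefl num_mem_iff)

lemma num_H: "num n \<in> H"
proof (induction n rule: less_induct)
  case (less n)
  show ?case by (rule H2_countable_intro) (auto simp: E_num less simp del: E_iff)
qed

lemma num_trans: "transset mem (num n)"
  unfolding transset_def
proof (intro allI impI)
  fix y z assume h: "mem z y \<and> mem y (num n)"
  then obtain m where m: "m < n" "y = num m" unfolding num_mem_iff by blast
  have "mem z (num m)" using h m(2) by simp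
  then obtain j where j: "j < m" "z = num j" unfolding num_mem_iff by blast
  then have "j < n" using m(1) by simp
  then show "mem z (num n)" unfolding num_mem_iff using j(2) by blast
qed

lemma num_ord: "ordinal mem (num n)"
  unfolding ordinal_def
proof (intro conjI allI impI)
  show "transset mem (num n)" by (rule num_trans)
  fix y assume "mem y (num n)"
  then obtain m where "y = num m" unfolding num_mem_iff by blast
  then show "transset mem y" using num_trans by simp
qed

lemma num_zs: "zero_or_succ (num n)"
proof (cases n)
  case 0 then show ?thesis using E_num0 by (simp add: zero_or_succ_def del: E_iff)
next
  case (Suc k)
  then have "is_succ mem (num n) (num k)" using E_numS by (simp add: is_succ_def del: E_iff)
  then show ?thesis by (auto simp: zero_or_succ_def)
qed

lemma ordinal_num_cases: "ordinal mem x \<Longrightarrow> zero_or_succ x \<Longrightarrow> (\<forall>m. mem m x \<longrightarrow> zero_or_succ m) \<Longrightarrow> \<exists>k. x = num k"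
proof (induction x rule: wf_induct_rule[OF wf_mem])
  case (1 x)
  show ?case
  proof (cases "E x = {}")
    case True
    then have "x = num 0" using E_num0 ext_inj by metis
    then show ?thesis by blast
  next
    case False
    then obtain k where k: "is_succ mem x k" using 1(3) unfolding zero_or_succ_def by blast
    then have kx: "mem k x" unfolding is_succ_def by (metis E_iff insertI1)
    have "ordinal mem k" using ordinal_mem 1(2) kx by blast
    moreover have "zero_or_succ k" using 1(4) kx by blast
    moreover have "\<forall>m. mem m k \<longrightarrow> zero_or_succ m" using 1(2,4) kx unfolding ordinal_def transset_def by blast
    ultimately obtain j where "k = num j" using 1(1) kx by blast
    then have "E x = E (num (Suc j))" using k E_numS unfolding is_succ_def by simp
    then show ?thesis using ext_inj by blast
  qed
qed

lemma natH_iff: assumes "x \<in> H" shows "natH x \<longleftrightarrow> (\<exists>k. x = num k)"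
proof -
  have "natH x \<longleftrightarrow> ordinal mem x \<and> zero_or_succ x \<and> (\<forall>m. mem m x \<longrightarrow> zero_or_succ m)"
    unfolding natH_def using ordH_iff zero_or_succH_iff assms H2_mem_closed by blast
  then show ?thesis using ordinal_num_cases num_ord num_zs num_mem_iff by metis
qed

lemma ctblH_iff: assumes "x \<in> H" shows "ctblH x \<longleftrightarrow> countable (E x)"
proof
  assume "ctblH x"
  then obtain g where g: "g \<in> H" "funH g"
    "\<forall>t\<in>H. mem t x \<longrightarrow> (\<exists>z\<in>H. mem z g \<and> (\<exists>n\<in>H. natH n \<and> pairH z n t))"
    unfolding ctblH_def by blast
  have fg: "isFun g" using g funH_iff by blast
  have ex: "\<exists>k z. mem z g \<and> is_pair mem z (num k) t" if tx: "mem t x" for t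
  proof -
    have "t \<in> H" using tx assms H2_mem_closed by blast
    then obtain z n where "z \<in> H" "mem z g" "n \<in> H" "natH n" "pairH z n t" using g(3) tx by blast
    then show ?thesis using natH_iff pairH_iff \<open>t \<in> H\<close> by blast
  qed
  define f where "f t = (SOME k. \<exists>z. mem z g \<and> is_pair mem z (num k) t)" for t
  have f: "\<exists>z. mem z g \<and> is_pair mem z (num (f t)) t" if "mem t x" for t
    unfolding f_def using ex[OF that] by (rule someI_ex)
  have "inj_on f (E x)"
  proof (rule inj_onI)
    fix t1 t2 assume "t1 \<in> E x" "t2 \<in> E x" "f t1 = f t2"
    then show "t1 = t2" using f[of t1] f[of t2] fg unfolding isFun_def by auto
  qed
  then show "countable (E x)" by (rule countableI')
next
  assume "countable (E x)"
  then obtain f :: "'v \<Rightarrow> nat" where f: "inj_on f (E x)" by (auto simp: countable_def)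
  define pz where "pz t = (SOME z. z \<in> H \<and> is_pair mem z (num (f t)) t)" for t
  have pz: "pz t \<in> H \<and> is_pair mem (pz t) (num (f t)) t" if "mem t x" for t
  proof -
    have "t \<in> H" using that assms H2_mem_closed by blast
    then have "\<exists>z. z \<in> H \<and> is_pair mem z (num (f t)) t" using pair_exists_H num_H by blast
    then show ?thesis unfolding pz_def by (rule someI_ex)
  qed
  have cg: "countable (pz ` E x)" using \<open>countable (E x)\<close> by (rule countable_image)
  obtain g where g: "E g = pz ` E x" using ex_ext_eq_countable[OF cg] by blast
  have "pz ` E x \<subseteq> H" using pz by auto
  then have gH: "g \<in> H" using g cg by (intro H2_countable_intro) simp_all
  have "isFun g" unfolding isFun_def
  proof (intro allI impI)
    fix z1 z2 a b c assume h: "mem z1 g \<and> mem z2 g \<and> is_pair mem z1 a b \<and> is_pair mem z2 a c"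
    then obtain t1 t2 where t: "mem t1 x" "mem t2 x" "z1 = pz t1" "z2 = pz t2" using g
      by (metis E_iff imageE)
    then have "a = num (f t1) \<and> b = t1" "a = num (f t2) \<and> c = t2" using pz h pair_inj by blast+
    then have "f t1 = f t2" using num_inj by metis
    then show "b = c" using f t \<open>a = num (f t1) \<and> b = t1\<close> \<open>a = num (f t2) \<and> c = t2\<close>
      by (auto dest: inj_onD)
  qed
  then have "funH g" using funH_iff gH by blast
  moreover have "\<exists>z\<in>H. mem z g \<and> (\<exists>n\<in>H. natH n \<and> pairH z n t)" if "t \<in> H" "mem t x" for t
    using pz[OF that(2)] g that num_H natH_iff pairH_iff
    by (intro bexI[of _ "pz t"] conjI bexI[of _ "num (f t)"]) auto
  ultimately show "ctblH x" unfolding ctblH_def using gH by blast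
qed

lemma Omega1_down: assumes "\<xi> \<in> Omega1 mem" "mem \<zeta> \<xi>" shows "\<zeta> \<in> Omega1 mem"
proof -
  have o: "ordinal mem \<xi>" "countable (E \<xi>)" using assms(1) by (auto simp: Omega1_def)
  have "E \<zeta> \<subseteq> E \<xi>"
  proof
    fix t assume "t \<in> E \<zeta>"
    then have "mem t \<zeta>" by simp
    have "transset mem \<xi>" using o(1) unfolding ordinal_def by (rule conjunct1)
    then have "mem t \<xi>" unfolding transset_def using \<open>mem t \<zeta>\<close> assms(2) by blast
    then show "t \<in> E \<xi>" by simp
  qed
  then have "countable (E \<zeta>)" using o(2) by (rule countable_subset)
  moreover have "ordinal mem \<zeta>" using o(1) assms(2) by (rule ordinal_mem)
  ultimately show ?thesis by (simp add: Omega1_def)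
qed

lemma Omega1_H2: "\<xi> \<in> Omega1 mem \<Longrightarrow> \<xi> \<in> H"
proof (induction \<xi> rule: wf_induct_rule[OF wf_mem])
  case (1 x)
  have "countable (E x)" using 1(2) by (simp add: Omega1_def)
  moreover have "E x \<subseteq> H"
  proof
    fix y assume "y \<in> E x"
    then have "mem y x" by simp
    then show "y \<in> H" using 1(1) Omega1_down[OF 1(2)] by blast
  qed
  ultimately show ?case by (rule H2_countable_intro)
qed

definition "Omega1H x \<longleftrightarrow> ordH x \<and> ctblH x"

lemma Omega1H_iff: assumes "x \<in> H" shows "Omega1H x \<longleftrightarrow> x \<in> Omega1 mem"
  using ordH_iff[OF assms] ctblH_iff[OF assms] by (simp add: Omega1_def Omega1H_def)

lemma Omega1_succ_exists: assumes "\<xi> \<in> Omega1 mem" shows "\<exists>s. is_succ mem s \<xi> \<and> s \<in> Omega1 mem"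
proof -
  have o: "ordinal mem \<xi>" "countable (E \<xi>)" using assms by (auto simp: Omega1_def)
  obtain s where s: "E s = insert \<xi> (E \<xi>)" using ex_ext_eq_countable o(2) by (metis countable_insert)
  have "ordinal mem s" using o(1) s unfolding ordinal_def transset_def by (metis E_iff insert_iff)
  then show ?thesis using s o(2) by (auto simp: is_succ_def Omega1_def simp del: E_iff)
qed

section \<open>Elementary submodels\<close>

lemma elem_sub_ext_H2: "elem_sub mem le M \<Longrightarrow> E M \<subseteq> H"
  by (simp add: elem_sub_def)

lemma elem_subD: "elem_sub mem le M \<Longrightarrow> (\<forall>n. e n \<in> E M) \<Longrightarrow> sat (E M) mem le \<phi> e \<longleftrightarrow> Sat \<phi> e"
  by (simp add: elem_sub_def)

lemma elementary_witness:
  assumes "elem_sub mem le M" "Sat (FEx \<phi>) e" "\<forall>n. e n \<in> E M"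
  shows "\<exists>x\<in>E M. Sat \<phi> (case_nat x e)"
proof -
  have "sat (E M) mem le (FEx \<phi>) e" using elem_subD[OF assms(1,3)] assms(2) by blast
  then obtain x where "x \<in> E M" "sat (E M) mem le \<phi> (case_nat x e)" by auto
  moreover have "\<forall>n. case_nat x e n \<in> E M" using all_case_nat[OF \<open>x \<in> E M\<close> assms(3)] .
  ultimately show ?thesis using elem_subD[OF assms(1)] by blast
qed

lemma E2_elem_sub: "M \<in> E2 mem le \<Longrightarrow> elem_sub mem le M"
  by (auto simp: E2_def E2_0_def E2_1_def)

lemma succ_in_elementary:
  assumes M: "elem_sub mem le M" and "\<zeta> \<in> E M" "is_succ mem s \<zeta>" "s \<in> H"
  shows "s \<in> E M"
proof -
  have zH: "\<zeta> \<in> H" using assms(2) elem_sub_ext_H2[OF M] by blast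
  have "succH s \<zeta>" using succH_iff[OF assms(4) zH] assms(3) by blast
  then have "Sat (FEx (fSucc 0 1)) (case_nat \<zeta> (\<lambda>_. \<zeta>))" using assms(4) by auto
  moreover have "\<forall>n. case_nat \<zeta> (\<lambda>_. \<zeta>) n \<in> E M" using assms(2) by (simp split: nat.split)
  ultimately have "\<exists>x\<in>E M. Sat (fSucc 0 1) (case_nat x (case_nat \<zeta> (\<lambda>_. \<zeta>)))"
    by (rule elementary_witness[OF M])
  then obtain x where x: "x \<in> E M" "succH x \<zeta>" by auto
  then have "is_succ mem x \<zeta>" using succH_iff zH elem_sub_ext_H2[OF M] by blast
  then have "x = s" using assms(3) by (intro ext_inj) (simp add: is_succ_def del: E_iff)
  then show ?thesis using x(1) by simp
qed

lemma num_in_elementary: assumes M: "elem_sub mem le M" and "d \<in> E M" shows "num k \<in> E M"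
proof (induction k)
  case 0
  have "emptyH (num 0)" using emptyH_iff[OF num_H] E_num0 by blast
  then have "Sat (FEx (fEmpty 0)) (\<lambda>_. d)" using num_H[of 0] by auto
  moreover have "\<forall>n. (\<lambda>_. d) n \<in> E M" using assms(2) by simp
  ultimately have "\<exists>x\<in>E M. Sat (fEmpty 0) (case_nat x (\<lambda>_. d))" by (rule elementary_witness[OF M])
  then obtain x where x: "x \<in> E M" "emptyH x" by auto
  then have "E x = {}" using emptyH_iff elem_sub_ext_H2[OF M] by blast
  then have "x = num 0" using E_num0 ext_inj by metis
  then show ?case using x by simp
next
  case (Suc k)
  have "is_succ mem (num (Suc k)) (num k)" using E_numS by (simp add: is_succ_def del: E_iff)
  then show ?case using succ_in_elementary[OF M Suc] num_H by blast
qed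

lemma fun_value_in_elementary: assumes M: "elem_sub mem le M" and g: "g \<in> E M" "isFun g" and a: "a \<in> E M"
  and z: "mem z g" "is_pair mem z a b" shows "b \<in> E M"
proof -
  have gH: "g \<in> H" and aH: "a \<in> H" using g a elem_sub_ext_H2[OF M] by blast+
  have zH: "z \<in> H" using gH z H2_mem_closed by blast
  have bH: "b \<in> H" using pair_H2[OF z(2) zH] by blast
  let ?e = "case_nat a (case_nat g (\<lambda>_. g))"
  have pz: "pairH z a b" using z zH bH aH pairH_iff by blast
  have "Sat (FEx (FEx (FConj (FMem 0 3) (fPair 0 2 1)))) ?e"
    using pz zH bH z(1) by (simp add: numeral_3_eq_3) blast
  moreover have "\<forall>n. ?e n \<in> E M" using g a by (simp split: nat.split)
  ultimately have "\<exists>w\<in>E M. Sat (FEx (FConj (FMem 0 3) (fPair 0 2 1))) (case_nat w ?e)"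
    by (rule elementary_witness[OF M])
  then obtain w where w: "w \<in> E M" "Sat (FEx (FConj (FMem 0 3) (fPair 0 2 1))) (case_nat w ?e)" by blast
  from w(2) obtain z' where z': "z' \<in> H" "mem z' g" "pairH z' a w" by (simp add: numeral_3_eq_3) blast
  have "w \<in> H" using w elem_sub_ext_H2[OF M] by blast
  then have "is_pair mem z' a w" using z' pairH_iff aH by blast
  then have "w = b" using g(2) z z' unfolding isFun_def by blast
  then show ?thesis using w by simp
qed

lemma countable_elem_subset: assumes M: "elem_sub mem le M" and X: "X \<in> E M" "countable (E X)"
  shows "E X \<subseteq> E M"
proof
  fix t assume t: "t \<in> E X"
  have XH: "X \<in> H" using X elem_sub_ext_H2[OF M] by blast
  have "Sat (fCtbl 0) (\<lambda>_. X)" using ctblH_iff[OF XH] X by simp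
  then have s1: "Sat (FEx (FConj (fFun 0) (fAll (fImp (FMem 0 2)
   (FEx (FConj (FMem 0 2) (FEx (FConj (fNat 0) (fPair 1 0 2))))))))) (\<lambda>_. X)"
    by (simp only: fCtbl_def numeral_2_eq_2)
  have s2: "\<forall>n. (\<lambda>_. X) n \<in> E M" using X by simp
  obtain g where g: "g \<in> E M" "Sat (FConj (fFun 0) (fAll (fImp (FMem 0 2)
   (FEx (FConj (FMem 0 2) (FEx (FConj (fNat 0) (fPair 1 0 2)))))))) (case_nat g (\<lambda>_. X))"
    using elementary_witness[OF M s1 s2] by (rule bexE) blast
  have gH: "g \<in> H" using g elem_sub_ext_H2[OF M] by blast
  have tH: "t \<in> H" using t XH H2_mem_closed by simp
  from g(2) have "funH g" and
    h: "\<forall>t\<in>H. mem t X \<longrightarrow> (\<exists>z\<in>H. mem z g \<and> (\<exists>n\<in>H. natH n \<and> pairH z n t))"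
    by (simp_all add: numeral_2_eq_2)
  then have fg: "isFun g" using funH_iff gH by blast
  obtain z n where zn: "z \<in> H" "mem z g" "n \<in> H" "natH n" "pairH z n t" using h tH t by simp blast
  obtain k where "n = num k" using natH_iff zn by blast
  moreover have "num k \<in> E M" using num_in_elementary[OF M X(1)] .
  ultimately show "t \<in> E M" using fun_value_in_elementary[OF M g(1) fg, of n z t] zn pairH_iff tH by blast
qed

lemma Omega1_Int_elementary:
  assumes M: "elem_sub mem le M" "countable (E M)" "E M \<noteq> {}"
    and \<delta>: "E \<delta> = Omega1 mem \<inter> E M"
  shows "\<delta> \<in> Omega1 mem" "is_limit mem \<delta>"
proof -
  have mem_\<delta>: "mem x \<delta> \<longleftrightarrow> x \<in> Omega1 mem \<and> x \<in> E M" for x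
    using \<delta> by (metis E_iff IntD1 IntD2 IntI)
  have down: "mem \<zeta> \<delta>" if "mem \<xi> \<delta>" "mem \<zeta> \<xi>" for \<xi> \<zeta>
  proof -
    have \<xi>: "\<xi> \<in> Omega1 mem" "\<xi> \<in> E M" using that(1) mem_\<delta> by blast+
    then have "countable (E \<xi>)" by (simp add: Omega1_def)
    then have "E \<xi> \<subseteq> E M" using countable_elem_subset[OF M(1) \<xi>(2)] by blast
    then have "\<zeta> \<in> E M" using that(2) by auto
    then show ?thesis using mem_\<delta> Omega1_down[OF \<xi>(1) that(2)] by blast
  qed
  have ord: "ordinal mem \<delta>"
    unfolding ordinal_def transset_def
  proof (intro conjI allI impI)
    fix y z assume "mem z y \<and> mem y \<delta>"
    then show "mem z \<delta>" using down by blast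
  next
    fix y z w assume "mem y \<delta>" "mem z w \<and> mem w y"
    moreover have "ordinal mem y" using \<open>mem y \<delta>\<close> mem_\<delta> by (simp add: Omega1_def)
    ultimately show "mem z y" unfolding ordinal_def transset_def by blast
  qed
  have "countable (E \<delta>)" unfolding \<delta> using M(2) by (rule countable_Int2)
  with ord show \<delta>O: "\<delta> \<in> Omega1 mem" by (simp add: Omega1_def)
  show "is_limit mem \<delta>"
    unfolding is_limit_def
  proof (intro conjI allI notI)
    show "ordinal mem \<delta>" by (rule ord)
  next
    obtain d where "d \<in> E M" using M(3) by blast
    then have "mem (num 0) \<delta>"
      using mem_\<delta> num_ord E_num0 num_in_elementary[OF M(1)] by (simp add: Omega1_def)
    moreover assume "E \<delta> = {}"
    ultimately show False by (metis E_iff empty_iff)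
  next
    fix \<zeta> assume s: "is_succ mem \<delta> \<zeta>"
    then have "mem \<zeta> \<delta>" unfolding is_succ_def by (metis E_iff insertI1)
    then have "\<zeta> \<in> E M" using mem_\<delta> by blast
    then have "\<delta> \<in> E M" using succ_in_elementary[OF M(1) _ s Omega1_H2[OF \<delta>O]] by blast
    then have "mem \<delta> \<delta>" using mem_\<delta> \<delta>O by blast
    then show False by simp
  qed
qed

lemma elem_sub_Int: assumes N: "elem_sub mem le N" and M: "elem_sub mem le M" and NM: "mem N M"
  and K: "E K = E N \<inter> E M" shows "elem_sub mem le K"
proof -
  have NH: "E N \<subseteq> H" using elem_sub_ext_H2[OF N] .
  have main: "(\<forall>n. e n \<in> E N \<inter> E M) \<Longrightarrow> sat (E N \<inter> E M) mem le \<phi> e = Sat \<phi> e" for \<phi> e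
  proof (induction \<phi> arbitrary: e)
    case (FNeg \<phi>)
    then show ?case by simp
  next
    case (FConj \<phi> \<psi>)
    then show ?case by simp
  next
    case (FEx \<phi>)
    have ex_e: "\<forall>n. case_nat x e n \<in> E N \<inter> E M" if "x \<in> E N \<inter> E M" for x
      using all_case_nat[OF that FEx.prems] .
    show ?case
    proof
      assume "sat (E N \<inter> E M) mem le (FEx \<phi>) e"
      then obtain x where x: "x \<in> E N \<inter> E M" "sat (E N \<inter> E M) mem le \<phi> (case_nat x e)" by auto
      then have "Sat \<phi> (case_nat x e)" using FEx.IH ex_e by blast
      moreover have "x \<in> H" using x(1) NH by blast
      ultimately show "Sat (FEx \<phi>) e" by auto
    next
      assume h: "Sat (FEx \<phi>) e"
      have eN: "\<forall>n. e n \<in> E N" and eM: "\<forall>n. e n \<in> E M" using FEx.prems by auto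
      have "sat (E N) mem le (FEx \<phi>) e" using h elem_subD[OF N eN] by blast
      then obtain x where x: "x \<in> E N" "sat (E N) mem le \<phi> (case_nat x e)" by auto
      txt \<open>Store N in a variable not free in \<phi>, so that the witness in N can be reflected
        into M by the formula relativized to N.\<close>
      define k where "k = free_bound \<phi>"
      define e' where "e' = e(k := N)"
      have agree: "sat D mem le \<phi> (case_nat y e') = sat D mem le \<phi> (case_nat y e)" for D y
      proof (rule sat_cong_free_bound)
        fix n assume n: "n < free_bound \<phi>"
        show "case_nat y e' n = case_nat y e n"
        proof (cases n)
          case (Suc m)
          then have "m \<noteq> k" using n k_def by simp
          then show ?thesis using Suc by (simp add: e'_def)
        qed simp
      qed
      have HN: "{x \<in> H. mem x N} = {y. mem y N}" using NH by auto
      have sat_r: "Sat (FConj (FMem 0 (Suc k)) (relativize (Suc k) \<phi>)) (case_nat y e') \<longleftrightarrow>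
          mem y N \<and> sat (E N) mem le \<phi> (case_nat y e)" for y
        by (simp add: sat_relativize e'_def agree[symmetric] ext_def Int_def HN)
      have "Sat (FEx (FConj (FMem 0 (Suc k)) (relativize (Suc k) \<phi>))) e'"
        using x NH sat_r by auto
      moreover have "\<forall>n. e' n \<in> E M" using eM NM by (simp add: e'_def)
      ultimately have "\<exists>y\<in>E M. Sat (FConj (FMem 0 (Suc k)) (relativize (Suc k) \<phi>)) (case_nat y e')"
        by (rule elementary_witness[OF M])
      then obtain y where y: "y \<in> E M" "mem y N" "sat (E N) mem le \<phi> (case_nat y e)"
        using sat_r by blast
      have yN: "y \<in> E N" using y(2) by simp
      have "Sat \<phi> (case_nat y e)" using y(3) elem_subD[OF N] all_case_nat[OF yN eN] by blast
      then have "sat (E N \<inter> E M) mem le \<phi> (case_nat y e)" using FEx.IH ex_e y(1) yN by blast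
      then show "sat (E N \<inter> E M) mem le (FEx \<phi>) e" using y(1) yN by auto
    qed
  qed simp_all
  show ?thesis unfolding elem_sub_def K using main NH by blast
qed

section \<open>Internally approachable models\<close>

lemma E2_0_props: "Q \<in> E2_0 mem le \<Longrightarrow> elem_sub mem le Q \<and> countable (E Q)"
  by (simp add: E2_0_def)

lemma E2_0_in_H2: assumes "Q \<in> E2_0 mem le" shows "Q \<in> H"
proof -
  have "elem_sub mem le Q" "countable (E Q)" using E2_0_props[OF assms] by auto
  then show ?thesis using H2_countable_intro elem_sub_ext_H2 by blast
qed

lemma internally_approachableE: assumes "internally_approachable mem le P"
  obtains Q where "\<forall>\<xi>\<in>Omega1 mem. Q \<xi> \<in> E2_0 mem le"
      "\<forall>\<xi>\<in>Omega1 mem. \<forall>\<eta>\<in>Omega1 mem. mem \<xi> \<eta> \<longrightarrow>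
            mem (Q \<xi>) (Q \<eta>) \<and> ext mem (Q \<xi>) \<subseteq> ext mem (Q \<eta>)"
      "\<forall>\<eta>\<in>Omega1 mem. is_limit mem \<eta> \<longrightarrow>
            ext mem (Q \<eta>) = (\<Union>\<xi>\<in>ext mem \<eta>. ext mem (Q \<xi>))"
      "ext mem P = (\<Union>\<xi>\<in>Omega1 mem. ext mem (Q \<xi>))"
      "\<forall>\<eta>\<in>Omega1 mem. \<forall>\<eta>'. is_succ mem \<eta>' \<eta> \<longrightarrow>
            (\<exists>s. is_seq mem s \<eta> Q \<and> mem s (Q \<eta>'))"
proof -
  from assms[unfolded internally_approachable_def] obtain Q where
    h: "(\<forall>\<xi>\<in>Omega1 mem. Q \<xi> \<in> E2_0 mem le)
      \<and> (\<forall>\<xi>\<in>Omega1 mem. \<forall>\<eta>\<in>Omega1 mem. mem \<xi> \<eta> \<longrightarrow>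
            mem (Q \<xi>) (Q \<eta>) \<and> ext mem (Q \<xi>) \<subseteq> ext mem (Q \<eta>))
      \<and> (\<forall>\<eta>\<in>Omega1 mem. is_limit mem \<eta> \<longrightarrow>
            ext mem (Q \<eta>) = (\<Union>\<xi>\<in>ext mem \<eta>. ext mem (Q \<xi>)))
      \<and> ext mem P = (\<Union>\<xi>\<in>Omega1 mem. ext mem (Q \<xi>))
      \<and> (\<forall>\<eta>\<in>Omega1 mem. \<forall>\<eta>'. is_succ mem \<eta>' \<eta> \<longrightarrow>
            (\<exists>s. is_seq mem s \<eta> Q \<and> mem s (Q \<eta>')))" by (elim exE)
  from h show thesis by (elim conjE) (rule that)
qed

lemma seq_domain_in_elementary:
  assumes M: "elem_sub mem le M" and s: "is_seq mem s \<eta> Q" "s \<in> E M"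
    and etaH: "\<eta> \<in> H" and QH: "\<And>\<xi>. mem \<xi> \<eta> \<Longrightarrow> Q \<xi> \<in> H"
  shows "\<eta> \<in> E M"
proof -
  define in_dom where "in_dom = (\<lambda>t. \<exists>z\<in>H. mem z s \<and> (\<exists>w\<in>H. pairH z t w))"
  have key: "mem t \<eta> \<longleftrightarrow> in_dom t" if tH: "t \<in> H" for t
  proof
    assume t: "mem t \<eta>"
    then have QtH: "Q t \<in> H" using QH by blast
    obtain z where z: "z \<in> H" "is_pair mem z t (Q t)" using pair_exists_H[OF tH QtH] by blast
    have "z \<in> {z. \<exists>\<xi>. mem \<xi> \<eta> \<and> is_pair mem z \<xi> (Q \<xi>)}" using z(2) t by blast
    then have "z \<in> E s" using s(1) unfolding is_seq_def by simp
    then have "mem z s" by simp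
    then show "in_dom t" unfolding in_dom_def using z QtH pairH_iff tH by blast
  next
    assume "in_dom t"
    then obtain z w where zw: "z \<in> H" "mem z s" "w \<in> H" "pairH z t w" unfolding in_dom_def by blast
    then have p: "is_pair mem z t w" using pairH_iff tH by blast
    have "z \<in> E s" using zw(2) by simp
    then obtain \<xi> where "mem \<xi> \<eta>" "is_pair mem z \<xi> (Q \<xi>)" using s(1) unfolding is_seq_def by blast
    then show "mem t \<eta>" using p pair_inj by blast
  qed
  have ext1: "extH \<eta> in_dom" unfolding extH_def using key by blast
  have "Sat (FEx (fExt 0 (FEx (FConj (FMem 0 3) (FEx (fPair 1 2 0)))))) (\<lambda>_. s)"
    using ext1 etaH unfolding in_dom_def by (simp add: numeral_3_eq_3) blast
  moreover have "\<forall>n. (\<lambda>_. s) n \<in> E M" using s(2) by simp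
  ultimately have "\<exists>x\<in>E M. Sat (fExt 0 (FEx (FConj (FMem 0 3) (FEx (fPair 1 2 0))))) (case_nat x (\<lambda>_. s))"
    by (rule elementary_witness[OF M])
  then obtain x where x: "x \<in> E M" "extH x in_dom" unfolding in_dom_def by (simp add: numeral_3_eq_3 del: E_iff) blast
  have xH: "x \<in> H" using x(1) elem_sub_ext_H2[OF M] by blast
  have "E x = E \<eta>"
  proof (intro set_eqI iffI)
    fix t assume "t \<in> E x"
    then have "t \<in> H" "mem t x" using xH H2_mem_closed by auto
    then show "t \<in> E \<eta>" using x(2) key unfolding extH_def by auto
  next
    fix t assume "t \<in> E \<eta>"
    then have "t \<in> H" "mem t \<eta>" using etaH H2_mem_closed by auto
    then show "t \<in> E x" using x(2) key unfolding extH_def by auto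
  qed
  then have "x = \<eta>" by (rule ext_inj)
  then show ?thesis using x(1) by simp
qed

lemma Omega1_in_E2_1: assumes P: "P \<in> E2_1 mem le" and eta: "\<eta> \<in> Omega1 mem" shows "\<eta> \<in> E P"
proof -
  have "internally_approachable mem le P" using P by (simp add: E2_1_def)
  then obtain Q where Q1: "\<forall>\<xi>\<in>Omega1 mem. Q \<xi> \<in> E2_0 mem le"
    and Q4: "E P = (\<Union>\<xi>\<in>Omega1 mem. E (Q \<xi>))"
    and Q5: "\<forall>\<eta>\<in>Omega1 mem. \<forall>\<eta>'. is_succ mem \<eta>' \<eta> \<longrightarrow> (\<exists>s. is_seq mem s \<eta> Q \<and> mem s (Q \<eta>'))"
    by (rule internally_approachableE)
  obtain s where s: "is_succ mem s \<eta>" "s \<in> Omega1 mem" using Omega1_succ_exists[OF eta] by blast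
  obtain s' where s': "is_seq mem s' \<eta> Q" "mem s' (Q s)" using Q5 eta s(1) by blast
  have "\<eta> \<in> E (Q s)"
  proof (rule seq_domain_in_elementary[OF _ s'(1)])
    show "elem_sub mem le (Q s)" using Q1 s(2) E2_0_props by blast
    show "Q \<xi> \<in> H" if "mem \<xi> \<eta>" for \<xi> using Q1 Omega1_down[OF eta that] E2_0_in_H2 by blast
  qed (use s'(2) Omega1_H2[OF eta] in simp_all)
  then show ?thesis using Q4 s(2) by blast
qed

lemma sat_fCtblOrd[simp]: "Sat (fCtblOrd x) e = Omega1H (e x)"
  by (simp add: fCtblOrd_def Omega1H_def)

definition "chain_codeH C N \<longleftrightarrow> funH C \<and>
 (\<forall>y\<in>H. mem y N \<longrightarrow> (\<exists>z\<in>H. mem z C \<and> (\<exists>\<xi>\<in>H. \<exists>X\<in>H. pairH z \<xi> X \<and> (Omega1H \<xi> \<and> mem y X)))) \<and>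
 (\<forall>z\<in>H. mem z C \<longrightarrow> (\<exists>\<xi>\<in>H. \<exists>X\<in>H. pairH z \<xi> X \<and> (Omega1H \<xi> \<and> ctblH X \<and> mem X N \<and>
     (limitH \<xi> \<longrightarrow> extH X (\<lambda>y. \<exists>\<zeta>\<in>H. mem \<zeta> \<xi> \<and> (\<exists>z'\<in>H. mem z' C \<and> (\<exists>X'\<in>H. pairH z' \<zeta> X' \<and> mem y X'))))))) \<and>
 (\<forall>\<xi>\<in>H. Omega1H \<xi> \<longrightarrow> (\<exists>z\<in>H. mem z C \<and> (\<exists>X\<in>H. pairH z \<xi> X)))"

lemma sat_fChain: "Sat fChain e \<longleftrightarrow> chain_codeH (e 0) (e 1)"
  unfolding fChain_def fChainCovers_def fChainEntries_def fChainTotal_def fUnionBelow_def chain_codeH_def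
  by (simp add: numeral_3_eq_3 numeral_2_eq_2 eval_nat_numeral)

text \<open>C codes a sequence, indexed by the countable ordinals, of countable members of N that
  exhausts N and is continuous at limits. This is the first-order trace of an internally
  approaching chain for N, so every elementary submodel containing N contains such a code.\<close>

definition "chain_code C N \<longleftrightarrow> isFun C \<and>
 (\<forall>y. mem y N \<longrightarrow> (\<exists>z \<xi> X. mem z C \<and> is_pair mem z \<xi> X \<and> \<xi> \<in> Omega1 mem \<and> mem y X)) \<and>
 (\<forall>z. mem z C \<longrightarrow> (\<exists>\<xi> X. is_pair mem z \<xi> X \<and> \<xi> \<in> Omega1 mem \<and> countable (E X) \<and> mem X N \<and>
     (is_limit mem \<xi> \<longrightarrow> E X = {y. \<exists>\<zeta> z' X'. mem \<zeta> \<xi> \<and> mem z' C \<and> is_pair mem z' \<zeta> X' \<and> mem y X'}))) \<and>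
 (\<forall>\<xi>\<in>Omega1 mem. \<exists>z X. mem z C \<and> is_pair mem z \<xi> X)"

lemma ball_mem_H2: "x \<in> H \<Longrightarrow> (\<forall>y\<in>H. mem y x \<longrightarrow> P y) \<longleftrightarrow> (\<forall>y. mem y x \<longrightarrow> P y)"
  using H2_mem_closed by blast

lemma bex_mem_H2: "x \<in> H \<Longrightarrow> (\<exists>y\<in>H. mem y x \<and> P y) \<longleftrightarrow> (\<exists>y. mem y x \<and> P y)"
  using H2_mem_closed by blast

lemma bex_pair_fst_H2:
  "z \<in> H \<Longrightarrow> (\<exists>a\<in>H. \<exists>b. is_pair mem z a b \<and> P a b) \<longleftrightarrow> (\<exists>a b. is_pair mem z a b \<and> P a b)"
  using pair_H2 by blast

lemma bex_pair_snd_H2: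
  "z \<in> H \<Longrightarrow> (\<exists>b\<in>H. is_pair mem z a b \<and> P b) \<longleftrightarrow> (\<exists>b. is_pair mem z a b \<and> P b)"
  "z \<in> H \<Longrightarrow> (\<exists>b\<in>H. is_pair mem z a b) \<longleftrightarrow> (\<exists>b. is_pair mem z a b)"
  using pair_H2 by blast+

lemma ball_Omega1_H2: "(\<forall>x\<in>H. x \<in> Omega1 mem \<longrightarrow> P x) \<longleftrightarrow> (\<forall>x\<in>Omega1 mem. P x)"
  using Omega1_H2 by blast

lemma chain_codeH_iff: assumes CH: "C \<in> H" and NH: "N \<in> H"
  shows "chain_codeH C N \<longleftrightarrow> chain_code C N"
proof -
  have "(\<forall>y\<in>H. mem y X \<longleftrightarrow> (\<exists>\<zeta>. mem \<zeta> \<xi> \<and> (\<exists>z'. mem z' C \<and> (\<exists>X'. is_pair mem z' \<zeta> X' \<and> mem y X'))))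
     \<longleftrightarrow> E X = {y. \<exists>\<zeta> z' X'. mem \<zeta> \<xi> \<and> mem z' C \<and> is_pair mem z' \<zeta> X' \<and> mem y X'}"
    if "X \<in> H" for X \<xi>
  proof -
    have "y \<in> H" if "mem z' C" "is_pair mem z' \<zeta> X'" "mem y X'" for y z' \<zeta> X'
      using that CH H2_mem_closed pair_H2 by meson
    then show ?thesis
      using H2_mem_closed[OF that] unfolding set_eq_iff E_iff mem_Collect_eq by blast
  qed
  then show ?thesis
    unfolding chain_codeH_def chain_code_def extH_def using assms
    by (simp add: pairH_iff Omega1H_iff ctblH_iff limitH_iff funH_iff ball_mem_H2 bex_mem_H2
        bex_pair_fst_H2 bex_pair_snd_H2 ball_Omega1_H2 cong: conj_cong)
qed

lemma graph_exists:
  assumes "|A| \<le>o aleph1" "A \<subseteq> H" "\<And>\<xi>. \<xi> \<in> A \<Longrightarrow> Q \<xi> \<in> H"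
  obtains C where "C \<in> H" "\<And>z. mem z C \<Longrightarrow> \<exists>\<xi>\<in>A. is_pair mem z \<xi> (Q \<xi>)"
    "\<And>\<xi>. \<xi> \<in> A \<Longrightarrow> \<exists>z. mem z C \<and> is_pair mem z \<xi> (Q \<xi>)"
proof -
  define pz where "pz \<xi> = (SOME z. z \<in> H \<and> is_pair mem z \<xi> (Q \<xi>))" for \<xi>
  have pz: "pz \<xi> \<in> H \<and> is_pair mem (pz \<xi>) \<xi> (Q \<xi>)" if "\<xi> \<in> A" for \<xi>
  proof -
    have "\<exists>z. z \<in> H \<and> is_pair mem z \<xi> (Q \<xi>)" using pair_exists_H assms(2,3) that by blast
    then show ?thesis unfolding pz_def by (rule someI_ex)
  qed
  have card: "|pz ` A| \<le>o aleph1" using card_of_image assms(1) by (blast intro: ordLeq_transitive)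
  then obtain C where C: "E C = pz ` A" using ex_ext_eq by blast
  have "C \<in> H" using H2_intro[of C] C card pz by auto
  moreover have "\<exists>\<xi>\<in>A. is_pair mem z \<xi> (Q \<xi>)" if "mem z C" for z
    using that C pz by (metis E_iff imageE)
  moreover have "\<exists>z. mem z C \<and> is_pair mem z \<xi> (Q \<xi>)" if "\<xi> \<in> A" for \<xi>
    using that C pz by (metis E_iff imageI)
  ultimately show ?thesis using that by blast
qed

lemma chain_code_exists: assumes N: "N \<in> E2_1 mem le" shows "\<exists>C\<in>H. chain_code C N"
proof -
  have IA: "internally_approachable mem le N" and card: "|E N| =o aleph1"
    using N by (auto simp: E2_1_def)
  obtain Q where Q1: "\<forall>\<xi>\<in>Omega1 mem. Q \<xi> \<in> E2_0 mem le"
    and Q2: "\<forall>\<xi>\<in>Omega1 mem. \<forall>\<eta>\<in>Omega1 mem. mem \<xi> \<eta> \<longrightarrow> mem (Q \<xi>) (Q \<eta>) \<and> E (Q \<xi>) \<subseteq> E (Q \<eta>)"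
    and Q3: "\<forall>\<eta>\<in>Omega1 mem. is_limit mem \<eta> \<longrightarrow> E (Q \<eta>) = (\<Union>\<xi>\<in>E \<eta>. E (Q \<xi>))"
    and Q4: "E N = (\<Union>\<xi>\<in>Omega1 mem. E (Q \<xi>))"
    using IA by (rule internally_approachableE)
  have "|Omega1 mem| \<le>o |E N|" using Omega1_in_E2_1[OF N] by (intro card_of_mono1) blast
  then have "|Omega1 mem| \<le>o aleph1" using card ordIso_iff_ordLeq ordLeq_transitive by blast
  then obtain C where CH: "C \<in> H"
    and memC: "\<And>z. mem z C \<Longrightarrow> \<exists>\<xi>\<in>Omega1 mem. is_pair mem z \<xi> (Q \<xi>)"
    and pzC: "\<And>\<xi>. \<xi> \<in> Omega1 mem \<Longrightarrow> \<exists>z. mem z C \<and> is_pair mem z \<xi> (Q \<xi>)"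
    using graph_exists[of "Omega1 mem" Q] Omega1_H2 Q1 E2_0_in_H2 by blast
  have pairC: "\<xi> \<in> Omega1 mem \<and> X = Q \<xi>" if zC: "mem z C" "is_pair mem z \<xi> X" for z \<xi> X
  proof -
    obtain \<xi>' where "\<xi>' \<in> Omega1 mem" "is_pair mem z \<xi>' (Q \<xi>')" using memC zC(1) by blast
    then show ?thesis using pair_inj zC(2) by metis
  qed
  have c1: "isFun C" unfolding isFun_def using pairC by metis
  have c2: "\<exists>z \<xi> X. mem z C \<and> is_pair mem z \<xi> X \<and> \<xi> \<in> Omega1 mem \<and> mem y X" if "mem y N" for y
  proof -
    have yN: "y \<in> E N" using that by simp
    have "y \<in> (\<Union>\<xi>\<in>Omega1 mem. E (Q \<xi>))" using yN Q4 by (simp only:)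
    then obtain \<xi> where "\<xi> \<in> Omega1 mem" "y \<in> E (Q \<xi>)" by blast
    then have "\<xi> \<in> Omega1 mem" "mem y (Q \<xi>)" by simp_all
    then show ?thesis using pzC by blast
  qed
  have c3: "\<exists>\<xi> X. is_pair mem z \<xi> X \<and> \<xi> \<in> Omega1 mem \<and> countable (E X) \<and> mem X N \<and>
     (is_limit mem \<xi> \<longrightarrow> E X = {y. \<exists>\<zeta> z' X'. mem \<zeta> \<xi> \<and> mem z' C \<and> is_pair mem z' \<zeta> X' \<and> mem y X'})"
    if zC3: "mem z C" for z
  proof -
    obtain \<xi> where xi: "\<xi> \<in> Omega1 mem" "is_pair mem z \<xi> (Q \<xi>)" using memC zC3 by blast
    have "countable (E (Q \<xi>))" using Q1 xi(1) E2_0_props by blast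
    moreover have "mem (Q \<xi>) N"
    proof -
      obtain s where s: "is_succ mem s \<xi>" "s \<in> Omega1 mem" using Omega1_succ_exists[OF xi(1)] by blast
      have "mem \<xi> s" using s(1) unfolding is_succ_def by (metis E_iff insertI1)
      then have "mem (Q \<xi>) (Q s)" using Q2 xi(1) s(2) by blast
      then have "Q \<xi> \<in> (\<Union>\<xi>\<in>Omega1 mem. E (Q \<xi>))" using s(2) by auto
      then have "Q \<xi> \<in> E N" using Q4 by (simp only:)
      then show ?thesis by simp
    qed
    moreover have "E (Q \<xi>) = {y. \<exists>\<zeta> z' X'. mem \<zeta> \<xi> \<and> mem z' C \<and> is_pair mem z' \<zeta> X' \<and> mem y X'}"
      if "is_limit mem \<xi>"
    proof (intro set_eqI iffI)
      fix y assume "y \<in> E (Q \<xi>)"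
      moreover have "E (Q \<xi>) = (\<Union>\<zeta>\<in>E \<xi>. E (Q \<zeta>))" using Q3 xi(1) that by blast
      ultimately have "y \<in> (\<Union>\<zeta>\<in>E \<xi>. E (Q \<zeta>))" by (simp only:)
      then obtain \<zeta> where "\<zeta> \<in> E \<xi>" "y \<in> E (Q \<zeta>)" by blast
      then have "mem \<zeta> \<xi>" "mem y (Q \<zeta>)" by simp_all
      moreover have "\<zeta> \<in> Omega1 mem" using Omega1_down xi(1) \<open>mem \<zeta> \<xi>\<close> by blast
      ultimately show "y \<in> {y. \<exists>\<zeta> z' X'. mem \<zeta> \<xi> \<and> mem z' C \<and> is_pair mem z' \<zeta> X' \<and> mem y X'}"
        using pzC by blast
    next
      fix y assume "y \<in> {y. \<exists>\<zeta> z' X'. mem \<zeta> \<xi> \<and> mem z' C \<and> is_pair mem z' \<zeta> X' \<and> mem y X'}"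
      then obtain \<zeta> z' X' where h: "mem \<zeta> \<xi>" "mem z' C" "is_pair mem z' \<zeta> X'" "mem y X'" by blast
      then have "X' = Q \<zeta>" using pairC by blast
      then have "y \<in> (\<Union>\<zeta>\<in>E \<xi>. E (Q \<zeta>))" using h by auto
      then show "y \<in> E (Q \<xi>)" using Q3 xi(1) that by blast
    qed
    ultimately show ?thesis using xi by blast
  qed
  have c4: "\<forall>\<xi>\<in>Omega1 mem. \<exists>z X. mem z C \<and> is_pair mem z \<xi> X" using pzC by blast
  have "chain_code C N" unfolding chain_code_def using c1 c2 c3 c4 by blast
  then show ?thesis using CH by blast
qed

lemma chain_code_in_elementary: assumes M: "elem_sub mem le M" and NM: "mem N M" and N: "N \<in> E2_1 mem le"
  shows "\<exists>C\<in>E M. chain_code C N"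
proof -
  have NH: "N \<in> H" using NM elem_sub_ext_H2[OF M] by auto
  obtain C where "C \<in> H" "chain_code C N" using chain_code_exists[OF N] by blast
  then have "chain_codeH C N" using chain_codeH_iff NH by blast
  then have "Sat (FEx fChain) (\<lambda>_. N)" using \<open>C \<in> H\<close> by (auto simp: sat_fChain)
  moreover have "\<forall>n. (\<lambda>_. N) n \<in> E M" using NM by simp
  ultimately have "\<exists>C\<in>E M. Sat fChain (case_nat C (\<lambda>_. N))" by (rule elementary_witness[OF M])
  then obtain C' where C': "C' \<in> E M" "chain_codeH C' N" by (auto simp: sat_fChain)
  then have "C' \<in> H" using elem_sub_ext_H2[OF M] by blast
  then show ?thesis using C' chain_codeH_iff NH by blast
qed

lemma chain_codeD:
  assumes "chain_code C N"
  shows "isFun C"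
    and "mem y N \<Longrightarrow> \<exists>z \<xi> X. mem z C \<and> is_pair mem z \<xi> X \<and> \<xi> \<in> Omega1 mem \<and> mem y X"
    and "mem z C \<Longrightarrow> \<exists>\<xi> X. is_pair mem z \<xi> X \<and> \<xi> \<in> Omega1 mem \<and> countable (E X) \<and> mem X N \<and>
     (is_limit mem \<xi> \<longrightarrow> E X = {y. \<exists>\<zeta> z' X'. mem \<zeta> \<xi> \<and> mem z' C \<and> is_pair mem z' \<zeta> X' \<and> mem y X'})"
    and "\<xi> \<in> Omega1 mem \<Longrightarrow> \<exists>z X. mem z C \<and> is_pair mem z \<xi> X"
  using assms unfolding chain_code_def by simp_all

lemma chain_code_entry:
  assumes C: "chain_code C N" and z: "mem z C" "is_pair mem z \<xi> X"
  shows "\<xi> \<in> Omega1 mem" "countable (E X)" "mem X N"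
    and "is_limit mem \<xi> \<Longrightarrow> E X = {y. \<exists>\<zeta> z' X'. mem \<zeta> \<xi> \<and> mem z' C \<and> is_pair mem z' \<zeta> X' \<and> mem y X'}"
proof -
  obtain \<xi>' X' where e: "is_pair mem z \<xi>' X'" "\<xi>' \<in> Omega1 mem" "countable (E X')" "mem X' N"
    "is_limit mem \<xi>' \<longrightarrow> E X' = {y. \<exists>\<zeta> z' X''. mem \<zeta> \<xi>' \<and> mem z' C \<and> is_pair mem z' \<zeta> X'' \<and> mem y X''}"
    using chain_codeD(3)[OF C z(1)] by (elim exE conjE) (rule that)
  moreover have "\<xi>' = \<xi>" "X' = X" using pair_inj[OF e(1) z(2)] by auto
  ultimately show "\<xi> \<in> Omega1 mem" "countable (E X)" "mem X N"
    "is_limit mem \<xi> \<Longrightarrow> E X = {y. \<exists>\<zeta> z' X'. mem \<zeta> \<xi> \<and> mem z' C \<and> is_pair mem z' \<zeta> X' \<and> mem y X'}"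
    by auto
qed

lemma chain_code_value_subset:
  assumes M: "elem_sub mem le M" and C: "C \<in> E M" "chain_code C N"
    and z: "\<xi> \<in> E M" "mem z C" "is_pair mem z \<xi> X"
  shows "E X \<subseteq> E M"
proof -
  have "X \<in> E M" using fun_value_in_elementary[OF M C(1) chain_codeD(1)[OF C(2)] z] .
  then show ?thesis using countable_elem_subset[OF M] chain_code_entry(2)[OF C(2) z(2,3)] by blast
qed

lemma chain_code_cover_elementary:
  assumes M: "elem_sub mem le M" and C: "C \<in> E M" "chain_code C N" and y: "y \<in> E M" "mem y N"
  obtains \<xi> z X where "\<xi> \<in> Omega1 mem" "\<xi> \<in> E M" "mem z C" "is_pair mem z \<xi> X" "mem y X"
proof -
  have MH: "E M \<subseteq> H" using elem_sub_ext_H2[OF M] .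
  obtain z0 \<xi>0 X0 where h0: "mem z0 C" "is_pair mem z0 \<xi>0 X0" "\<xi>0 \<in> Omega1 mem" "mem y X0"
    using chain_codeD(2)[OF C(2) y(2)] by (elim exE conjE) (rule that)
  have z0H: "z0 \<in> H" using C(1) h0(1) MH H2_mem_closed by blast
  have xX0: "\<xi>0 \<in> H" "X0 \<in> H" using pair_H2[OF h0(2) z0H] by auto
  have "Sat (FEx (FEx (FEx (FConj (FMem 1 4) (FConj (fPair 1 2 0) (FConj (fCtblOrd 2) (FMem 3 0)))))))
      (case_nat y (\<lambda>_. C))"
    using h0 z0H xX0 pairH_iff Omega1H_iff by (simp add: eval_nat_numeral) blast
  moreover have "\<forall>n. case_nat y (\<lambda>_. C) n \<in> E M" using y C(1) by (simp split: nat.split)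
  ultimately have "\<exists>\<xi>\<in>E M. Sat (FEx (FEx (FConj (FMem 1 4) (FConj (fPair 1 2 0) (FConj (fCtblOrd 2) (FMem 3 0))))))
      (case_nat \<xi> (case_nat y (\<lambda>_. C)))" by (rule elementary_witness[OF M])
  then obtain \<xi> z X where h: "\<xi> \<in> E M" "z \<in> H" "X \<in> H" "mem z C" "pairH z \<xi> X" "Omega1H \<xi>" "mem y X"
    by (simp add: eval_nat_numeral del: E_iff) blast
  have "\<xi> \<in> H" using h(1) MH by blast
  then show ?thesis using that h pairH_iff Omega1H_iff by blast
qed

lemma E2_1_mem_E2_1_subset: assumes M: "M \<in> E2_1 mem le" and N: "N \<in> E2_1 mem le" and NM: "mem N M"
  shows "E N \<subseteq> E M"
proof
  fix y assume y: "y \<in> E N"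
  have ME: "elem_sub mem le M" using M by (simp add: E2_1_def)
  obtain C where C: "C \<in> E M" "chain_code C N" using chain_code_in_elementary[OF ME NM N] by blast
  have yN: "mem y N" using y by simp
  obtain z \<xi> X where zx: "mem z C" "is_pair mem z \<xi> X" "\<xi> \<in> Omega1 mem" "mem y X"
    using chain_codeD(2)[OF C(2) yN] by (elim exE conjE) (rule that)
  have "\<xi> \<in> E M" using Omega1_in_E2_1[OF M zx(3)] .
  then have "E X \<subseteq> E M" using chain_code_value_subset[OF ME C _ zx(1,2)] by blast
  then show "y \<in> E M" using zx(4) by auto
qed

lemma Int_E2_0_E2_1: assumes M: "M \<in> E2_0 mem le" and N: "N \<in> E2_1 mem le" and NM: "mem N M"
  shows "\<exists>K. E K = E N \<inter> E M \<and> K \<in> E2_0 mem le \<and> mem K N"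
proof -
  have ME: "elem_sub mem le M" and Mc: "countable (E M)" using M by (auto simp: E2_0_def)
  have NE: "elem_sub mem le N" using N by (simp add: E2_1_def)
  obtain C where C: "C \<in> E M" "chain_code C N" using chain_code_in_elementary[OF ME NM N] by blast
  obtain \<delta> where \<delta>: "E \<delta> = Omega1 mem \<inter> E M"
    using ex_ext_eq_countable[OF countable_Int2[OF Mc]] by blast
  have mem_\<delta>: "mem x \<delta> \<longleftrightarrow> x \<in> Omega1 mem \<and> x \<in> E M" for x
    using \<delta> by (metis E_iff IntD1 IntD2 IntI)
  have "E M \<noteq> {}" using NM by auto
  note \<delta>\<omega> = Omega1_Int_elementary[OF ME Mc this \<delta>]
  obtain z X where zX: "mem z C" "is_pair mem z \<delta> X"
    using chain_codeD(4)[OF C(2) \<delta>\<omega>(1)] by (elim exE conjE) (rule that)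
  note X = chain_code_entry[OF C(2) zX]
  have EX: "E X = {y. \<exists>\<zeta> z' X'. mem \<zeta> \<delta> \<and> mem z' C \<and> is_pair mem z' \<zeta> X' \<and> mem y X'}"
    using X(4)[OF \<delta>\<omega>(2)] .
  have "E X = E N \<inter> E M"
  proof (intro set_eqI iffI)
    fix y assume "y \<in> E X"
    then have "\<exists>\<zeta> z' X'. mem \<zeta> \<delta> \<and> mem z' C \<and> is_pair mem z' \<zeta> X' \<and> mem y X'"
      unfolding EX by simp
    then obtain \<zeta> z' X' where h: "mem \<zeta> \<delta>" "mem z' C" "is_pair mem z' \<zeta> X'" "mem y X'"
      by (elim exE conjE)
    have "\<zeta> \<in> E M" using h(1) mem_\<delta> by blast
    then have "y \<in> E M" using chain_code_value_subset[OF ME C _ h(2,3)] h(4) by auto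
    moreover have "E X' \<subseteq> E N"
      using countable_elem_subset[OF NE] chain_code_entry(2,3)[OF C(2) h(2,3)] by simp
    then have "y \<in> E N" using h(4) by auto
    ultimately show "y \<in> E N \<inter> E M" by blast
  next
    fix y assume y: "y \<in> E N \<inter> E M"
    obtain \<xi> z' X' where h: "\<xi> \<in> Omega1 mem" "\<xi> \<in> E M" "mem z' C" "is_pair mem z' \<xi> X'" "mem y X'"
      using chain_code_cover_elementary[OF ME C, of y] y by auto
    have "mem \<xi> \<delta>" using h(1,2) mem_\<delta> by blast
    then show "y \<in> E X" unfolding EX using h(3-5) by auto
  qed
  moreover have "X \<in> E2_0 mem le"
    using elem_sub_Int[OF NE ME NM calculation] X(2) by (simp add: E2_0_def)
  ultimately show ?thesis using X(3) by blast
qed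

section \<open>The condition p^M\<close>

definition meet :: "'v \<Rightarrow> 'v \<Rightarrow> 'v" where
  "meet N M = (SOME K. E K = E N \<inter> E M)"

lemma ext_meet: assumes "N \<in> H" shows "E (meet N M) = E N \<inter> E M"
proof -
  have "|E N \<inter> E M| \<le>o aleph1"
    using ordLeq_transitive[OF card_of_mono1[OF Int_lower1] H2_ext_ordLeq_aleph1[OF assms]] .
  then have "\<exists>K. E K = E N \<inter> E M" by (rule ex_ext_eq)
  then show ?thesis unfolding meet_def by (rule someI_ex)
qed

lemma meet_unique: "N \<in> H \<Longrightarrow> E K = E N \<inter> E M \<Longrightarrow> K = meet N M"
  by (rule ext_inj) (simp add: ext_meet del: E_iff)

lemma meet_E2:
  assumes M: "M \<in> E2 mem le" and N: "N \<in> E2 mem le" and NM: "mem N M"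
  shows "meet N M \<in> E2 mem le \<and> (meet N M = N \<or> mem (meet N M) N)"
proof -
  have ME: "elem_sub mem le M" using E2_elem_sub[OF M] .
  have NH: "N \<in> H" using elem_sub_ext_H2[OF ME] NM by auto
  show ?thesis
  proof (cases "E N \<subseteq> E M")
    case True
    then have "N = meet N M" using meet_unique[OF NH] by blast
    then show ?thesis using N by simp
  next
    case False
    then have "\<not> countable (E N)" using countable_elem_subset[OF ME] NM by auto
    then have N1: "N \<in> E2_1 mem le" using N by (simp add: E2_def E2_0_def)
    then have "M \<notin> E2_1 mem le" using E2_1_mem_E2_1_subset NM False by blast
    then have M0: "M \<in> E2_0 mem le" using M by (simp add: E2_def)
    obtain K where "E K = E N \<inter> E M" "K \<in> E2_0 mem le" "mem K N"
      using Int_E2_0_E2_1[OF M0 N1 NM] by blast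
    then show ?thesis using meet_unique[OF NH] by (auto simp: E2_def)
  qed
qed

definition hull :: "'v \<Rightarrow> 'v \<Rightarrow> 'v set" where
  "hull p M = insert M (E p \<union> (\<lambda>N. meet N M) ` E p)"

lemma E2_subset_H2: "E2 mem le \<subseteq> H"
proof
  fix P assume "P \<in> E2 mem le"
  then have "|E P| \<le>o aleph1"
    by (auto simp: E2_def E2_0_def E2_1_def ordIso_iff_ordLeq countable_ordLeq_aleph1)
  moreover have "E P \<subseteq> H" using elem_sub_ext_H2[OF E2_elem_sub] \<open>P \<in> E2 mem le\<close> .
  ultimately show "P \<in> H" by (simp add: H2_intro)
qed

lemma Mforce_mem_subset:
  assumes "M \<in> E2 mem le" "p \<in> Mforce mem le" "mem p M"
  shows "E p \<subseteq> E M"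
proof -
  have "countable (E p)" using assms(2) by (simp add: Mforce_def countable_finite)
  then show ?thesis using countable_elem_subset[OF E2_elem_sub[OF assms(1)]] assms(3) by simp
qed

lemma hull_in_chain:
  assumes M: "M \<in> E2 mem le" and p: "p \<in> Mforce mem le" and pM: "mem p M"
  shows "in_chain mem (hull p M)"
proof -
  have pE2: "E p \<subseteq> E2 mem le" and "in_chain mem (E p)" using p by (auto simp: Mforce_def)
  then obtain xs where xs: "set xs = E p" "successively mem xs"
    unfolding in_chain_def successively_conv_nth by blast
  have p_sub_M: "E p \<subseteq> E M" using Mforce_mem_subset[OF M p pM] .
  let ?f = "\<lambda>N. if meet N M = N then [N] else [meet N M, N]"
  have "successively mem (concat (map ?f xs) @ [M])"
  proof (rule successively_interpolate)
    show "\<forall>N\<in>set xs. meet N M \<noteq> N \<longrightarrow> mem (meet N M) N \<and> (\<forall>y. mem y N \<and> mem y M \<longrightarrow> mem y (meet N M))"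
    proof
      fix N assume "N \<in> set xs"
      then have N: "N \<in> E2 mem le" "mem N M" "N \<in> H"
        using xs(1) pE2 p_sub_M E2_subset_H2 by auto
      show "meet N M \<noteq> N \<longrightarrow> mem (meet N M) N \<and> (\<forall>y. mem y N \<and> mem y M \<longrightarrow> mem y (meet N M))"
        using meet_E2[OF M N(1,2)] ext_meet[OF N(3), of M] by auto
    qed
  qed (use xs p_sub_M in auto)
  moreover have "set (concat (map ?f xs) @ [M]) = hull p M"
    using xs(1) by (auto simp: hull_def)
  ultimately show ?thesis unfolding in_chain_def successively_conv_nth by blast
qed

lemma hull_Int_closed:
  assumes p: "p \<in> Mforce mem le" and pH: "E p \<subseteq> H"
    and A: "A \<in> hull p M" and B: "B \<in> hull p M"
  shows "\<exists>K\<in>hull p M. E K = E A \<inter> E B"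
proof -
  have "E ` hull p M = insert (E M) (E ` E p \<union> (\<lambda>N. E (meet N M)) ` E p)"
    unfolding hull_def by (simp only: image_insert image_Un image_image)
  also have "(\<lambda>N. E (meet N M)) ` E p = (\<lambda>X. X \<inter> E M) ` E ` E p"
    unfolding image_image using pH by (intro image_cong refl ext_meet) blast
  finally have ext_hull: "E ` hull p M = insert (E M) (E ` E p \<union> (\<lambda>X. X \<inter> E M) ` E ` E p)" .
  have closed: "\<forall>X\<in>E ` E p. \<forall>Y\<in>E ` E p. X \<inter> Y \<in> E ` E p"
  proof (intro ballI)
    fix X Y assume "X \<in> E ` E p" "Y \<in> E ` E p"
    then obtain N N' where N: "N \<in> E p" "N' \<in> E p" and XY: "X = E N" "Y = E N'"
      by blast
    have "\<forall>N\<in>E p. \<forall>N'\<in>E p. \<exists>K\<in>E p. E K = E N \<inter> E N'"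
      using p by (simp add: Mforce_def)
    from bspec[OF bspec[OF this N(1)] N(2)]
    obtain K where K: "K \<in> E p" "E K = E N \<inter> E N'" by (rule bexE)
    show "X \<inter> Y \<in> E ` E p" by (rule rev_image_eqI[OF K(1)]) (simp add: K(2) XY)
  qed
  have "\<forall>universe_mem\<in>E ` hull p M. \<forall>V\<in>E ` hull p M. universe_mem \<inter> V \<in> E ` hull p M"
    unfolding ext_hull by (rule Int_closed_insert_restrict[OF closed])
  from bspec[OF bspec[OF this imageI[OF A]] imageI[OF B]]
  obtain K where "K \<in> hull p M" "E A \<inter> E B = E K" by (rule imageE)
  then show ?thesis by auto
qed

lemma hull_subset:
  assumes r: "r \<in> Mforce mem le" and pr: "E p \<subseteq> E r" and Mr: "mem M r" and pH: "E p \<subseteq> H"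
  shows "hull p M \<subseteq> E r"
proof -
  have "meet N M \<in> E r" if N: "N \<in> E p" for N
  proof -
    have "\<forall>N\<in>E r. \<forall>N'\<in>E r. \<exists>K\<in>E r. E K = E N \<inter> E N'"
      using r by (simp add: Mforce_def)
    moreover have "N \<in> E r" "M \<in> E r" using pr N Mr by auto
    ultimately obtain K where "K \<in> E r" "E K = E N \<inter> E M" by (meson bexE)
    then show ?thesis using meet_unique pH N by blast
  qed
  then show ?thesis using pr Mr by (auto simp: hull_def)
qed

lemma hull_in_Mforce:
  assumes M: "M \<in> E2 mem le" and p: "p \<in> Mforce mem le" and pM: "mem p M"
    and pH: "E p \<subseteq> H" and q: "E q = hull p M"
  shows "q \<in> Mforce mem le"
proof -
  have "E p \<subseteq> E2 mem le" using p by (simp add: Mforce_def)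
  then have "hull p M \<subseteq> E2 mem le"
    using M meet_E2[OF M] Mforce_mem_subset[OF M p pM] by (auto simp: hull_def subset_iff)
  moreover have "finite (hull p M)" using p by (simp add: hull_def Mforce_def)
  ultimately show ?thesis
    unfolding Mforce_def mem_Collect_eq q using hull_in_chain[OF M p pM] hull_Int_closed[OF p pH] by blast
qed

end

theorem mainTheorem1:
  fixes mem :: "'v \<Rightarrow> 'v \<Rightarrow> bool" and le :: "'v \<Rightarrow> 'v \<Rightarrow> bool"
    and M p :: 'v
  assumes "universe mem"
    and "wo_H2 mem le"
    and "M \<in> E2 mem le"
    and "p \<in> Mforce mem le"
    and "mem p M"
  shows "\<exists>pM \<in> Mforce mem le. Mle mem pM p \<and> mem M pM
           \<and> (\<forall>r \<in> Mforce mem le. Mle mem r p \<and> mem M r \<longrightarrow> Mle mem r pM)"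
proof -
  interpret set_universe_le mem le by unfold_locales (rule assms(1))
  have pH: "E p \<subseteq> H"
    using Mforce_mem_subset[OF assms(3-5)] elem_sub_ext_H2[OF E2_elem_sub[OF assms(3)]] by blast
  have "finite (hull p M)" using assms(4) by (simp add: hull_def Mforce_def)
  then obtain pM where pM: "E pM = hull p M"
    using ex_ext_eq_countable[OF countable_finite] by blast
  show ?thesis
  proof (intro bexI[of _ pM] conjI ballI impI)
    show "pM \<in> Mforce mem le" using hull_in_Mforce[OF assms(3-5) pH pM] .
    show "Mle mem pM p" unfolding Mle_def pM hull_def by blast
    have "M \<in> E pM" unfolding pM hull_def by blast
    then show "mem M pM" by simp
    fix r assume r: "r \<in> Mforce mem le" "Mle mem r p \<and> mem M r"
    then have "E p \<subseteq> E r" by (simp add: Mle_def)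
    then show "Mle mem r pM" using hull_subset[OF r(1) _ _ pH] r(2) pM by (simp add: Mle_def)
  qed
qed

end
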